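(* Let $1\le p<\infty$ and let $d_{w,p}$ be a Lorentz sequence space. Then $\mathcal K(d_{w,p})\subsetneq\overline{J^j}$ and $J^j\subseteq \mathcal{SS}(d_{w,p})\cap J^{\ell_p}$.
   Context: Let $1\le p<\infty$ and let $w=(w_n)$ be a real sequence with $w_1=1$, $w_n\downarrow 0$ and $\sum_n w_n=\infty$. The Lorentz sequence space $d_{w,p}$ is the Banach space of all $x=(x_n)\in c_0$ with $\|x\|_{d_{w,p}}=\big(\sum_{n}w_n (x^*_n)^p\big)^{1/p}<\infty$, where $(x^*_n)$ is the non-increasing rearrangement of $(|x_n|)$. Let $(e_n)$, $(f_n)$ be the unit vector bases of $d_{w,p}$, $\ell_p$, and $j\colon\ell_p\to d_{w,p}$ the formal identity, $j(f_n)=e_n$. $J^j$ is the set of $S\in L(d_{w,p})$ of the form $S=AjB$ with $A\in L(d_{w,p})$, $B\in L(d_{w,p},\ell_p)$; $\overline{J^j}$ is its norm closure. $J^{\ell_p}$ is the set of $S\in L(d_{w,p})$ of the form $S=BA$ with $A\in L(d_{w,p},\ell_p)$, $B\in L(\ell_p,d_{w,p})$. $\mathcal K(d_{w,p})$ and $\mathcal{SS}(d_{w,p})$ denote the compact and strictly singular operators on $d_{w,p}$ respectively. *)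

theory Defs
  imports "HOL-Analysis.Analysis"
begin

text \<open>Real sequences are functions nat => real; indices start at 0
  (so the paper's w_1 is w 0 here). Operators are maps on sequences; only their
  values on the relevant domain space matter.\<close>

type_synonym seq = "nat \<Rightarrow> real"

text \<open>Non-increasing rearrangement of (|x_n|) (for x in c_0):
  x*_(n+1) = inf over sets A with |A| <= n of sup_{k not in A} |x_k|.\<close>
definition rearr :: "seq \<Rightarrow> nat \<Rightarrow> real" where
  "rearr x n = (INF A \<in> {A :: nat set. finite A \<and> card A \<le> n}. SUP k \<in> - A. \<bar>x k\<bar>)"

definition c0 :: "seq set" where
  "c0 = {x. x \<longlonglongrightarrow> 0}"

definition lorentz_space :: "seq \<Rightarrow> real \<Rightarrow> seq set" where
  "lorentz_space w p = {x \<in> c0. summable (\<lambda>n. w n * rearr x n powr p)}"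

definition lorentz_norm :: "seq \<Rightarrow> real \<Rightarrow> seq \<Rightarrow> real" where
  "lorentz_norm w p x = (\<Sum>n. w n * rearr x n powr p) powr (1 / p)"

definition lp_space :: "real \<Rightarrow> seq set" where
  "lp_space p = {x. summable (\<lambda>n. \<bar>x n\<bar> powr p)}"

definition lp_norm :: "real \<Rightarrow> seq \<Rightarrow> real" where
  "lp_norm p x = (\<Sum>n. \<bar>x n\<bar> powr p) powr (1 / p)"

definition bounded_op ::
  "seq set \<Rightarrow> (seq \<Rightarrow> real) \<Rightarrow> seq set \<Rightarrow> (seq \<Rightarrow> real) \<Rightarrow> (seq \<Rightarrow> seq) \<Rightarrow> bool" where
  "bounded_op X NX Y NY T \<longleftrightarrow>
     (\<forall>x\<in>X. T x \<in> Y) \<and>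
     (\<forall>x\<in>X. \<forall>y\<in>X. \<forall>a b::real. T (\<lambda>k. a * x k + b * y k) = (\<lambda>k. a * T x k + b * T y k)) \<and>
     (\<exists>C. \<forall>x\<in>X. NY (T x) \<le> C * NX x)"

text \<open>Formal identity j : l_p -> d_{w,p}, j(f_n) = e_n.\<close>
definition jmap :: "seq \<Rightarrow> seq" where
  "jmap x = x"

definition Ld :: "seq \<Rightarrow> real \<Rightarrow> (seq \<Rightarrow> seq) set" where
  "Ld w p = {T. bounded_op (lorentz_space w p) (lorentz_norm w p)
                           (lorentz_space w p) (lorentz_norm w p) T}"

definition J_j :: "seq \<Rightarrow> real \<Rightarrow> (seq \<Rightarrow> seq) set" where
  "J_j w p = {S \<in> Ld w p. \<exists>A B.
      A \<in> Ld w p \<and>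
      bounded_op (lorentz_space w p) (lorentz_norm w p) (lp_space p) (lp_norm p) B \<and>
      (\<forall>x\<in>lorentz_space w p. S x = A (jmap (B x)))}"

definition op_closure :: "seq \<Rightarrow> real \<Rightarrow> (seq \<Rightarrow> seq) set \<Rightarrow> (seq \<Rightarrow> seq) set" where
  "op_closure w p \<J> = {S \<in> Ld w p. \<forall>\<epsilon>>0. \<exists>T\<in>\<J>.
      \<forall>x\<in>lorentz_space w p.
        lorentz_norm w p (\<lambda>k. S x k - T x k) \<le> \<epsilon> * lorentz_norm w p x}"

definition J_lp :: "seq \<Rightarrow> real \<Rightarrow> (seq \<Rightarrow> seq) set" where
  "J_lp w p = {S \<in> Ld w p. \<exists>A B.
      bounded_op (lorentz_space w p) (lorentz_norm w p) (lp_space p) (lp_norm p) A \<and>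
      bounded_op (lp_space p) (lp_norm p) (lorentz_space w p) (lorentz_norm w p) B \<and>
      (\<forall>x\<in>lorentz_space w p. S x = B (A x))}"

definition compact_ops :: "seq \<Rightarrow> real \<Rightarrow> (seq \<Rightarrow> seq) set" where
  "compact_ops w p = {T \<in> Ld w p. \<forall>xs :: nat \<Rightarrow> seq.
      (\<forall>i. xs i \<in> lorentz_space w p \<and> lorentz_norm w p (xs i) \<le> 1) \<longrightarrow>
      (\<exists>r y. strict_mono r \<and> y \<in> lorentz_space w p \<and>
         (\<lambda>i. lorentz_norm w p (\<lambda>k. T (xs (r i)) k - y k)) \<longlonglongrightarrow> 0)}"

definition lin_subspace :: "seq set \<Rightarrow> bool" where
  "lin_subspace M \<longleftrightarrow> (\<lambda>k. 0) \<in> M \<and>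
     (\<forall>x\<in>M. \<forall>y\<in>M. \<forall>a b::real. (\<lambda>k. a * x k + b * y k) \<in> M)"

definition infinite_dim :: "seq set \<Rightarrow> bool" where
  "infinite_dim M \<longleftrightarrow> (\<exists>v :: nat \<Rightarrow> seq. (\<forall>i. v i \<in> M) \<and>
     (\<forall>n (c :: nat \<Rightarrow> real). (\<forall>k. (\<Sum>i<n. c i * v i k) = 0) \<longrightarrow> (\<forall>i<n. c i = 0)))"

definition strictly_singular_ops :: "seq \<Rightarrow> real \<Rightarrow> (seq \<Rightarrow> seq) set" where
  "strictly_singular_ops w p = {T \<in> Ld w p. \<forall>M.
      M \<subseteq> lorentz_space w p \<and> lin_subspace M \<and> infinite_dim M \<longrightarrow>
      \<not> (\<exists>c>0. \<forall>x\<in>M. c * lorentz_norm w p x \<le> lorentz_norm w p (T x))}"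

end

theory Submission
  imports Defs
begin

text \<open>Truncating the range of an operator T on d_{w,p} to the first N coordinates gives an
  operator of finite rank, which factors through l_p because \<Parallel>x\<Parallel>_{d_{w,p}} \<le> \<Parallel>x\<Parallel>_p; if T is
  compact these truncations converge to T in norm, since the tails of a relatively compact subset
  of d_{w,p} are uniformly small.

  The inclusion is strict: with W(N) = w_1 + \<dots> + w_N, choose block lengths N_n such that W(N_n)
  at least doubles and W(N_n)/N_n at least halves from one block to the next. Then summing x over
  consecutive blocks of these lengths with weights W(N_n)^{1/p}/N_n is bounded from d_{w,p} into
  l_p (an Abel summation against the non-increasing rearrangement), and it maps normalised block
  indicators onto the unit vectors, so it is not compact.

  If S = A j B were bounded below on an infinite-dimensional subspace M, the l_p-norm would be
  dominated by the d_{w,p}-norm on B(M). But B(M) is infinite-dimensional, so pushing a vector of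
  it towards the boundary of the unit ball of l_\<infinity> produces, for every D, some y \<in> B(M) with
  |y_k| \<le> 1 everywhere and |y_k| = 1 at D coordinates. Then \<Parallel>y\<Parallel>_p^p \<ge> D, while
  \<Parallel>y\<Parallel>_{d_{w,p}}^p \<le> L + w_L \<Parallel>y\<Parallel>_p^p for every L, which is impossible once w_L is small and D is
  large. Finally A j B = (A restricted to l_p) B, and that restriction is bounded, again by
  \<Parallel>x\<Parallel>_{d_{w,p}} \<le> \<Parallel>x\<Parallel>_p.\<close>

section \<open>The non-increasing rearrangement\<close>

definition bounded_seq :: "seq \<Rightarrow> bool" where
  "bounded_seq x \<longleftrightarrow> (\<exists>B. \<forall>k. \<bar>x k\<bar> \<le> B)"

definition tail_sup :: "seq \<Rightarrow> nat set \<Rightarrow> real" where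
  "tail_sup x A = (SUP k\<in>-A. \<bar>x k\<bar>)"

lemma c0_imp_bounded_seq: "x \<in> c0 \<Longrightarrow> bounded_seq x"
proof -
  assume "x \<in> c0"
  then have "Bseq x" using convergent_imp_Bseq convergentI unfolding c0_def by blast
  then show ?thesis unfolding bounded_seq_def Bseq_def by (metis real_norm_def less_imp_le)
qed

lemma bounded_seq_mult: "bounded_seq x \<Longrightarrow> bounded_seq (\<lambda>k. c * x k)"
  unfolding bounded_seq_def by (metis abs_mult mult_left_mono abs_ge_zero)

lemma bounded_seq_add: "bounded_seq x \<Longrightarrow> bounded_seq y \<Longrightarrow> bounded_seq (\<lambda>k. x k + y k)"
  unfolding bounded_seq_def by (metis abs_triangle_ineq add_mono order_trans)

lemma c0_mult: "x \<in> c0 \<Longrightarrow> (\<lambda>k. c * x k) \<in> c0"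
  unfolding c0_def using tendsto_mult_left[of x 0 sequentially c] by simp

lemma c0_add: "x \<in> c0 \<Longrightarrow> y \<in> c0 \<Longrightarrow> (\<lambda>k. x k + y k) \<in> c0"
  unfolding c0_def using tendsto_add[of x 0 sequentially y 0] by simp

lemma c0_eventually_dominated: "x \<in> c0 \<Longrightarrow> (\<And>k. k \<ge> N \<Longrightarrow> y k = x k \<or> y k = 0) \<Longrightarrow> y \<in> c0"
proof -
  assume x: "x \<in> c0" and y: "\<And>k. k \<ge> N \<Longrightarrow> y k = x k \<or> y k = 0"
  have "\<forall>\<^sub>F k in sequentially. norm (y k) \<le> \<bar>x k\<bar>"
    unfolding eventually_sequentially
  proof (intro exI allI impI)
    fix k assume "k \<ge> N"
    then show "norm (y k) \<le> \<bar>x k\<bar>" using y[of k] by auto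
  qed
  moreover have "(\<lambda>k. \<bar>x k\<bar>) \<longlonglongrightarrow> 0" using x unfolding c0_def by (simp add: tendsto_rabs_zero_iff)
  ultimately have "y \<longlonglongrightarrow> 0" by (rule Lim_null_comparison)
  then show "y \<in> c0" unfolding c0_def by simp
qed

lemma c0_fun_upd: "x \<in> c0 \<Longrightarrow> x(k0 := v) \<in> c0"
proof -
  assume "x \<in> c0"
  then have "x \<longlonglongrightarrow> 0" unfolding c0_def by simp
  moreover have "\<forall>\<^sub>F k in sequentially. x k = (x(k0:=v)) k"
    unfolding eventually_sequentially by (intro exI[of _ "Suc k0"]) auto
  ultimately have "(x(k0:=v)) \<longlonglongrightarrow> 0" by (rule Lim_transform_eventually)
  then show ?thesis unfolding c0_def by simp
qed

lemma c0_has_max_abs: "x \<in> c0 \<Longrightarrow> \<exists>k0. \<forall>k. \<bar>x k\<bar> \<le> \<bar>x k0\<bar>"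
proof -
  assume x: "x \<in> c0"
  show ?thesis
  proof (cases "\<forall>k. x k = 0")
    case True then show ?thesis by auto
  next
    case False
    then obtain j where j: "x j \<noteq> 0" by auto
    from x have "x \<longlonglongrightarrow> 0" unfolding c0_def by simp
    then have "\<forall>\<^sub>F k in sequentially. \<bar>x k\<bar> < \<bar>x j\<bar>"
      using j by (auto dest!: order_tendstoD(2)[OF tendsto_rabs, of _ 0 _ "\<bar>x j\<bar>"])
    then obtain N where N: "\<And>k. k \<ge> N \<Longrightarrow> \<bar>x k\<bar> < \<bar>x j\<bar>"
      unfolding eventually_sequentially by auto
    define M where "M = max N j"
    have "Max ((\<lambda>k. \<bar>x k\<bar>) ` {..M}) \<in> (\<lambda>k. \<bar>x k\<bar>) ` {..M}" by (rule Max_in) auto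
    then obtain k0 where k0: "\<bar>x k0\<bar> = Max ((\<lambda>k. \<bar>x k\<bar>) ` {..M})" by (metis imageE)
    have le_k0: "k \<le> M \<Longrightarrow> \<bar>x k\<bar> \<le> \<bar>x k0\<bar>" for k unfolding k0 by (rule Max_ge) auto
    have "\<bar>x k\<bar> \<le> \<bar>x k0\<bar>" for k
    proof (cases "k \<le> M")
      case False
      then have "\<bar>x k\<bar> < \<bar>x j\<bar>" using N by (simp add: M_def)
      then show ?thesis using le_k0[of j] by (simp add: M_def)
    qed (rule le_k0)
    then show ?thesis by blast
  qed
qed

lemma tail_sup_upper: "bounded_seq x \<Longrightarrow> k \<notin> A \<Longrightarrow> \<bar>x k\<bar> \<le> tail_sup x A"
  unfolding tail_sup_def bounded_seq_def
  by (rule cSUP_upper) (auto intro: bdd_aboveI2)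

lemma tail_sup_least: "finite A \<Longrightarrow> (\<And>k. k \<notin> A \<Longrightarrow> \<bar>x k\<bar> \<le> c) \<Longrightarrow> tail_sup x A \<le> c"
  unfolding tail_sup_def
  by (rule cSUP_least) (use ex_new_if_finite[OF infinite_UNIV_nat] in auto)

lemma tail_sup_nonneg: "bounded_seq x \<Longrightarrow> finite A \<Longrightarrow> 0 \<le> tail_sup x A"
proof -
  assume "bounded_seq x" "finite A"
  moreover obtain k where "k \<notin> A" using ex_new_if_finite[OF infinite_UNIV_nat \<open>finite A\<close>] by blast
  ultimately show ?thesis using tail_sup_upper[of x k A] by (meson abs_ge_zero order_trans)
qed

lemma rearr_le_tail_sup: "bounded_seq x \<Longrightarrow> finite A \<Longrightarrow> card A \<le> n \<Longrightarrow> rearr x n \<le> tail_sup x A"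
  unfolding rearr_def tail_sup_def[symmetric]
  by (rule cINF_lower) (auto intro!: bdd_belowI2[where m=0] tail_sup_nonneg)

lemma rearr_greatest: "(\<And>A. finite A \<Longrightarrow> card A \<le> n \<Longrightarrow> c \<le> tail_sup x A) \<Longrightarrow> c \<le> rearr x n"
  unfolding rearr_def tail_sup_def[symmetric]
  by (rule cINF_greatest) (auto intro: exI[of _ "{}"])

lemma rearr_nonneg: "bounded_seq x \<Longrightarrow> 0 \<le> rearr x n"
  by (rule rearr_greatest) (simp add: tail_sup_nonneg)

lemma abs_le_rearr_0: "bounded_seq x \<Longrightarrow> \<bar>x k\<bar> \<le> rearr x 0"
  by (rule rearr_greatest) (auto intro: tail_sup_upper)

lemma rearr_le_bound: "bounded_seq x \<Longrightarrow> (\<And>k. \<bar>x k\<bar> \<le> c) \<Longrightarrow> rearr x n \<le> c"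
  using rearr_le_tail_sup[of x "{}" n] tail_sup_least[of "{}" x c] by force

lemma rearr_0_eq_max: "x \<in> c0 \<Longrightarrow> (\<And>k. \<bar>x k\<bar> \<le> \<bar>x k0\<bar>) \<Longrightarrow> rearr x 0 = \<bar>x k0\<bar>"
  using abs_le_rearr_0[OF c0_imp_bounded_seq, of x k0]
    rearr_le_bound[OF c0_imp_bounded_seq, of x "\<bar>x k0\<bar>" 0] by force

lemma rearr_mono: "bounded_seq y \<Longrightarrow> (\<And>k. \<bar>x k\<bar> \<le> \<bar>y k\<bar>) \<Longrightarrow> rearr x n \<le> rearr y n"
proof -
  assume y: "bounded_seq y" and le: "\<And>k. \<bar>x k\<bar> \<le> \<bar>y k\<bar>"
  have x: "bounded_seq x" using y le unfolding bounded_seq_def by (meson order_trans)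
  show ?thesis
  proof (rule rearr_greatest)
    fix A :: "nat set" assume A: "finite A" "card A \<le> n"
    have "rearr x n \<le> tail_sup x A" by (rule rearr_le_tail_sup[OF x A])
    also have "\<dots> \<le> tail_sup y A" using A le tail_sup_upper[OF y]
      by (intro tail_sup_least) (auto intro: order_trans)
    finally show "rearr x n \<le> tail_sup y A" .
  qed
qed

lemma rearr_Suc_le: "bounded_seq x \<Longrightarrow> rearr x (Suc n) \<le> rearr x n"
  by (rule rearr_greatest) (auto intro: rearr_le_tail_sup)

lemma rearr_antimono:
  assumes "bounded_seq x" "m \<le> n" shows "rearr x n \<le> rearr x m"
  using assms(2)
proof (induction n rule: dec_induct)
  case (step n)
  then show ?case using rearr_Suc_le[OF assms(1), of n] by linarith
qed simp_all

lemma rearr_eq_0_if_support: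
  "bounded_seq x \<Longrightarrow> finite F \<Longrightarrow> card F \<le> n \<Longrightarrow> (\<And>k. k \<notin> F \<Longrightarrow> x k = 0) \<Longrightarrow> rearr x n = 0"
proof -
  assume x: "bounded_seq x" "finite F" "card F \<le> n" and z: "\<And>k. k \<notin> F \<Longrightarrow> x k = 0"
  have "rearr x n \<le> tail_sup x F" by (rule rearr_le_tail_sup[OF x])
  also have "\<dots> \<le> 0" by (rule tail_sup_least) (use x z in auto)
  finally show ?thesis using rearr_nonneg[OF x(1), of n] by linarith
qed

lemma rearr_mult_le: "bounded_seq x \<Longrightarrow> c \<noteq> 0 \<Longrightarrow> rearr (\<lambda>k. c * x k) n \<le> \<bar>c\<bar> * rearr x n"
proof -
  assume x: "bounded_seq x" and c: "c \<noteq> 0"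
  have "rearr (\<lambda>k. c * x k) n / \<bar>c\<bar> \<le> rearr x n"
  proof (rule rearr_greatest)
    fix A :: "nat set" assume A: "finite A" "card A \<le> n"
    have "rearr (\<lambda>k. c * x k) n \<le> tail_sup (\<lambda>k. c * x k) A"
      by (rule rearr_le_tail_sup[OF bounded_seq_mult[OF x] A])
    also have "\<dots> \<le> \<bar>c\<bar> * tail_sup x A"
      by (rule tail_sup_least)
        (use A tail_sup_upper[OF x] in \<open>auto simp: abs_mult intro: mult_left_mono\<close>)
    finally show "rearr (\<lambda>k. c * x k) n / \<bar>c\<bar> \<le> tail_sup x A"
      using c by (simp add: divide_le_eq mult.commute)
  qed
  then show ?thesis using c by (simp add: divide_le_eq mult.commute)
qed

lemma rearr_mult: "bounded_seq x \<Longrightarrow> rearr (\<lambda>k. c * x k) n = \<bar>c\<bar> * rearr x n"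
proof (cases "c = 0")
  case True
  have "bounded_seq (\<lambda>k. c * x k)" using True unfolding bounded_seq_def by auto
  then show ?thesis using rearr_eq_0_if_support[of "\<lambda>k. c * x k" "{}" n] True by simp
next
  case False
  assume x: "bounded_seq x"
  have "rearr x n = rearr (\<lambda>k. (1/c) * (c * x k)) n" using False by simp
  also have "\<dots> \<le> \<bar>1/c\<bar> * rearr (\<lambda>k. c * x k) n"
    using False by (intro rearr_mult_le bounded_seq_mult x) simp
  finally have "\<bar>c\<bar> * rearr x n \<le> rearr (\<lambda>k. c * x k) n"
    using False by (simp add: field_simps abs_divide)
  then show ?thesis using rearr_mult_le[OF x False, of n] by linarith
qed

lemma rearr_add_le:
  assumes x: "bounded_seq x" and y: "bounded_seq y"
  shows "rearr (\<lambda>k. x k + y k) (m + n) \<le> rearr x m + rearr y n"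
proof -
  have "rearr (\<lambda>k. x k + y k) (m + n) - rearr y n \<le> rearr x m"
  proof (rule rearr_greatest)
    fix A :: "nat set" assume A: "finite A" "card A \<le> m"
    have "rearr (\<lambda>k. x k + y k) (m + n) - tail_sup x A \<le> rearr y n"
    proof (rule rearr_greatest)
      fix B :: "nat set" assume B: "finite B" "card B \<le> n"
      have "card (A \<union> B) \<le> m + n" using A B card_Un_le[of A B] by linarith
      then have "rearr (\<lambda>k. x k + y k) (m + n) \<le> tail_sup (\<lambda>k. x k + y k) (A \<union> B)"
        using A B by (intro rearr_le_tail_sup bounded_seq_add x y) auto
      also have "\<dots> \<le> tail_sup x A + tail_sup y B"
        using A B tail_sup_upper[OF x, of _ A] tail_sup_upper[OF y, of _ B]
        by (intro tail_sup_least) (auto intro: order_trans[OF abs_triangle_ineq] add_mono)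
      finally show "rearr (\<lambda>k. x k + y k) (m + n) - tail_sup x A \<le> tail_sup y B" by linarith
    qed
    then show "rearr (\<lambda>k. x k + y k) (m + n) - rearr y n \<le> tail_sup x A" by linarith
  qed
  then show ?thesis by linarith
qed

lemma rearr_Suc_eq_remove_max:
  assumes x: "x \<in> c0" and k0: "\<And>k. \<bar>x k\<bar> \<le> \<bar>x k0\<bar>"
  shows "rearr x (Suc i) = rearr (x(k0:=0)) i"
proof -
  have bx: "bounded_seq x" by (rule c0_imp_bounded_seq[OF x])
  have bx': "bounded_seq (x(k0:=0))" by (rule c0_imp_bounded_seq[OF c0_fun_upd[OF x]])
  have "rearr x (Suc i) \<le> rearr (x(k0:=0)) i"
  proof (rule rearr_greatest)
    fix A :: "nat set" assume A: "finite A" "card A \<le> i"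
    have "rearr x (Suc i) \<le> tail_sup x (insert k0 A)"
      using A by (intro rearr_le_tail_sup[OF bx]) (auto simp: card_insert_if)
    also have "\<dots> \<le> tail_sup (x(k0:=0)) A"
    proof (rule tail_sup_least)
      fix k assume "k \<notin> insert k0 A"
      then show "\<bar>x k\<bar> \<le> tail_sup (x(k0:=0)) A" using tail_sup_upper[OF bx', of k A] by auto
    qed (use A in simp)
    finally show "rearr x (Suc i) \<le> tail_sup (x(k0:=0)) A" .
  qed
  moreover have "rearr (x(k0:=0)) i \<le> rearr x (Suc i)"
  proof (rule rearr_greatest)
    fix A :: "nat set" assume A: "finite A" "card A \<le> Suc i"
    show "rearr (x(k0:=0)) i \<le> tail_sup x A"
    proof (cases "k0 \<in> A")
      case True
      have "rearr (x(k0:=0)) i \<le> tail_sup (x(k0:=0)) (A - {k0})"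
        using A True by (intro rearr_le_tail_sup[OF bx']) (auto simp: card_Diff_singleton)
      also have "\<dots> \<le> tail_sup x A"
      proof (rule tail_sup_least)
        fix k assume "k \<notin> A - {k0}"
        then show "\<bar>(x(k0:=0)) k\<bar> \<le> tail_sup x A"
          using tail_sup_upper[OF bx, of k A] tail_sup_nonneg[OF bx A(1)] by (cases "k = k0") auto
      qed (use A in simp)
      finally show ?thesis .
    next
      case False
      have "rearr (x(k0:=0)) i \<le> \<bar>x k0\<bar>" by (rule rearr_le_bound[OF bx']) (use k0 in auto)
      also have "\<dots> \<le> tail_sup x A" by (rule tail_sup_upper[OF bx False])
      finally show ?thesis .
    qed
  qed
  ultimately show ?thesis by linarith
qed

lemma suminf_abs_powr_remove:
  fixes x :: seq
  assumes "summable (\<lambda>k. \<bar>x k\<bar> powr p)" "p > 0"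
  shows "summable (\<lambda>k. \<bar>(x(k0:=0)) k\<bar> powr p)"
    and "(\<Sum>k. \<bar>x k\<bar> powr p) = \<bar>x k0\<bar> powr p + (\<Sum>k. \<bar>(x(k0:=0)) k\<bar> powr p)"
proof -
  have s1: "summable (\<lambda>k. if k = k0 then \<bar>x k0\<bar> powr p else (0::real))"
    by (rule summable_single)
  show s2: "summable (\<lambda>k. \<bar>(x(k0:=0)) k\<bar> powr p)"
    by (rule summable_comparison_test'[OF assms(1), of 0]) auto
  have "(\<lambda>k. \<bar>x k\<bar> powr p) = (\<lambda>k. (if k = k0 then \<bar>x k0\<bar> powr p else 0) + \<bar>(x(k0:=0)) k\<bar> powr p)"
    using assms(2) by (auto simp: fun_eq_iff)
  then show "(\<Sum>k. \<bar>x k\<bar> powr p) = \<bar>x k0\<bar> powr p + (\<Sum>k. \<bar>(x(k0:=0)) k\<bar> powr p)"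
    using suminf_add[OF s1 s2] sums_single[of k0 "\<lambda>_. \<bar>x k0\<bar> powr p"] by (simp add: sums_iff)
qed

lemma sum_rearr_powr_le_suminf:
  assumes "p > 0"
  shows "x \<in> c0 \<Longrightarrow> summable (\<lambda>k. \<bar>x k\<bar> powr p) \<Longrightarrow> (\<Sum>i<N. rearr x i powr p) \<le> (\<Sum>k. \<bar>x k\<bar> powr p)"
proof (induction N arbitrary: x)
  case 0
  then show ?case by (auto intro!: suminf_nonneg)
next
  case (Suc N)
  obtain k0 where k0: "\<And>k. \<bar>x k\<bar> \<le> \<bar>x k0\<bar>" using c0_has_max_abs[OF Suc.prems(1)] by blast
  have "(\<Sum>i<Suc N. rearr x i powr p) = rearr x 0 powr p + (\<Sum>i<N. rearr x (Suc i) powr p)"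
    by (rule sum.lessThan_Suc_shift)
  also have "\<dots> = \<bar>x k0\<bar> powr p + (\<Sum>i<N. rearr (x(k0:=0)) i powr p)"
    using rearr_0_eq_max[OF Suc.prems(1) k0] rearr_Suc_eq_remove_max[OF Suc.prems(1) k0] by simp
  also have "\<dots> \<le> \<bar>x k0\<bar> powr p + (\<Sum>k. \<bar>(x(k0:=0)) k\<bar> powr p)"
    by (intro add_left_mono Suc.IH c0_fun_upd Suc.prems(1) suminf_abs_powr_remove(1)[OF Suc.prems(2) assms])
  also have "\<dots> = (\<Sum>k. \<bar>x k\<bar> powr p)" using suminf_abs_powr_remove(2)[OF Suc.prems(2) assms] by simp
  finally show ?case .
qed

lemma sum_abs_powr_le_sum_rearr:
  assumes "p > 0"
  shows "x \<in> c0 \<Longrightarrow> finite F \<Longrightarrow> card F = N \<Longrightarrow> (\<Sum>k\<in>F. \<bar>x k\<bar> powr p) \<le> (\<Sum>i<N. rearr x i powr p)"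
proof (induction N arbitrary: x F)
  case 0
  then show ?case by simp
next
  case (Suc N)
  obtain k0 where k0: "\<And>k. \<bar>x k\<bar> \<le> \<bar>x k0\<bar>" using c0_has_max_abs[OF Suc.prems(1)] by blast
  have "F \<noteq> {}" using Suc.prems by auto
  then obtain k1 where k1: "k1 \<in> F" "k0 \<in> F \<Longrightarrow> k1 = k0" by blast
  define F' where "F' = F - {k1}"
  have F': "finite F'" "card F' = N" "k0 \<notin> F'" using Suc.prems k1 unfolding F'_def
    by (auto simp: card_Diff_singleton)
  have "(\<Sum>k\<in>F. \<bar>x k\<bar> powr p) = \<bar>x k1\<bar> powr p + (\<Sum>k\<in>F'. \<bar>x k\<bar> powr p)"
    unfolding F'_def using Suc.prems(2) k1(1) by (simp add: sum.remove)
  also have "(\<Sum>k\<in>F'. \<bar>x k\<bar> powr p) = (\<Sum>k\<in>F'. \<bar>(x(k0:=0)) k\<bar> powr p)"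
    using F'(3) by (intro sum.cong) auto
  also have "\<bar>x k1\<bar> powr p + (\<Sum>k\<in>F'. \<bar>(x(k0:=0)) k\<bar> powr p)
      \<le> rearr x 0 powr p + (\<Sum>i<N. rearr (x(k0:=0)) i powr p)"
    using k0[of k1] rearr_0_eq_max[OF Suc.prems(1) k0] assms
    by (intro add_mono powr_mono2 Suc.IH c0_fun_upd Suc.prems(1) F'(1,2)) auto
  also have "\<dots> = (\<Sum>i<Suc N. rearr x i powr p)"
    unfolding sum.lessThan_Suc_shift using rearr_Suc_eq_remove_max[OF Suc.prems(1) k0] by simp
  finally show ?case .
qed

lemma powr_inverse_le_mult:
  fixes a b K p :: real
  assumes "p > 0" "0 \<le> a" "0 \<le> b" "0 \<le> K" "a \<le> K * b"
  shows "a powr (1/p) \<le> K powr (1/p) * b powr (1/p)"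
  using assms powr_mono2[of "1/p" a "K * b"] by (simp add: powr_mult)

lemma mult_powr_inverse_le_imp_le:
  fixes a b c p :: real
  assumes "p > 0" "0 \<le> a" "0 \<le> b" "0 \<le> c" "c * a powr (1/p) \<le> b powr (1/p)"
  shows "c powr p * a \<le> b"
proof -
  have "(c * a powr (1/p)) powr p \<le> (b powr (1/p)) powr p"
    using assms by (intro powr_mono2) auto
  then show ?thesis using assms by (simp add: powr_mult powr_powr)
qed

lemma powr_inverse_le_mult_imp_le:
  fixes a b C p :: real
  assumes "p > 0" "0 \<le> a" "0 \<le> b" "0 \<le> C" "a powr (1/p) \<le> C * b powr (1/p)"
  shows "a \<le> C powr p * b"
proof -
  have "(a powr (1/p)) powr p \<le> (C * b powr (1/p)) powr p"
    using assms by (intro powr_mono2) auto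
  then show ?thesis using assms by (simp add: powr_mult powr_powr)
qed

lemma nonneg_partial_sums_bounded:
  fixes f :: "nat \<Rightarrow> real"
  assumes "\<And>n. 0 \<le> f n" "\<And>N. (\<Sum>n<N. f n) \<le> C"
  shows "summable f" "suminf f \<le> C"
  using summableI_nonneg_bounded[OF assms] suminf_le_const assms(2) by blast+

lemma sum_lessThan_double_div_2: "(\<Sum>m<2*(N::nat). h (m div 2)) = 2 * (\<Sum>n<N. (h n :: real))"
proof (induction N)
  case 0 then show ?case by simp
next
  case (Suc N)
  have "2 * Suc N = Suc (Suc (2*N))" by simp
  then show ?case using Suc by simp
qed

lemma add_powr_le_2_powr:
  fixes a b p :: real
  assumes "0 \<le> a" "0 \<le> b" "p > 0"
  shows "(a + b) powr p \<le> 2 powr p * (a powr p + b powr p)"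
proof -
  have "(a + b) powr p \<le> (2 * max a b) powr p" using assms by (intro powr_mono2) auto
  also have "\<dots> = 2 powr p * max a b powr p" by (simp add: powr_mult)
  also have "max a b powr p \<le> a powr p + b powr p" using assms by (cases "a \<le> b") auto
  finally show ?thesis by (simp add: mult_left_mono)
qed

lemma two_mult_two_powr_le_four_powr: "1 \<le> p \<Longrightarrow> 2 * 2 powr p \<le> (4::real) powr p"
  using powr_mono[of 1 p 2] mult_right_mono[of 2 "2 powr p" "2 powr p"]
  by (simp flip: powr_mult)

lemma abs_sum_powr_le_card_powr:
  fixes f :: "nat \<Rightarrow> real"
  assumes p: "p \<ge> 1" and I: "finite I"
  shows "\<bar>\<Sum>k\<in>I. f k\<bar> powr p \<le> real (card I) powr (p - 1) * (\<Sum>k\<in>I. \<bar>f k\<bar> powr p)"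
proof -
  define S where "S = {k\<in>I. f k \<noteq> 0}"
  have S: "finite S" "S \<subseteq> I" unfolding S_def using I by auto
  have sum_S: "(\<Sum>k\<in>I. g \<bar>f k\<bar>) = (\<Sum>k\<in>S. g \<bar>f k\<bar>)" if "g 0 = 0" for g :: "real \<Rightarrow> real"
    unfolding S_def using I that by (intro sum.mono_neutral_right) auto
  have "\<bar>\<Sum>k\<in>I. f k\<bar> powr p \<le> (\<Sum>k\<in>I. \<bar>f k\<bar>) powr p"
    using p by (intro powr_mono2) (auto intro: sum_abs)
  also have "\<dots> = (\<Sum>k\<in>S. \<bar>f k\<bar>) powr p" using sum_S[of "\<lambda>t. t"] by simp
  also have "\<dots> \<le> real (card I) powr (p - 1) * (\<Sum>k\<in>S. \<bar>f k\<bar> powr p)"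
  proof (cases "S = {}")
    case True then show ?thesis using p by simp
  next
    case False
    define n where "n = real (card S)"
    have n: "n \<ge> 1" unfolding n_def using False S(1) by (simp add: Suc_leI card_gt_0_iff)
    have "(\<Sum>k\<in>S. (1/n) *\<^sub>R \<bar>f k\<bar>) powr p \<le> (\<Sum>k\<in>S. (1/n) * \<bar>f k\<bar> powr p)"
      using convex_on_sum[OF S(1) False powr_convex[OF p], of "\<lambda>_. 1/n" "\<lambda>k. \<bar>f k\<bar>"] n
      unfolding n_def by (auto simp: S_def)
    then have jensen: "((1/n) * (\<Sum>k\<in>S. \<bar>f k\<bar>)) powr p \<le> (1/n) * (\<Sum>k\<in>S. \<bar>f k\<bar> powr p)"
      by (simp add: sum_distrib_left)
    have "(\<Sum>k\<in>S. \<bar>f k\<bar>) powr p = n powr p * ((1/n) * (\<Sum>k\<in>S. \<bar>f k\<bar>)) powr p"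
      using n by (simp add: powr_mult powr_divide sum_nonneg)
    also have "\<dots> \<le> n powr p * ((1/n) * (\<Sum>k\<in>S. \<bar>f k\<bar> powr p))"
      using jensen by (intro mult_left_mono) auto
    also have "\<dots> = n powr (p - 1) * (\<Sum>k\<in>S. \<bar>f k\<bar> powr p)"
      using n by (simp add: powr_diff)
    also have "\<dots> \<le> real (card I) powr (p - 1) * (\<Sum>k\<in>S. \<bar>f k\<bar> powr p)"
      using p n card_mono[OF I S(2)] unfolding n_def
      by (intro mult_right_mono powr_mono2) (auto intro: sum_nonneg)
    finally show ?thesis .
  qed
  also have "\<dots> = real (card I) powr (p - 1) * (\<Sum>k\<in>I. \<bar>f k\<bar> powr p)"
    using sum_S[of "\<lambda>t. t powr p"] by simp
  finally show ?thesis .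
qed

lemma sum_mult_antimono_le:
  fixes a b y :: "nat \<Rightarrow> real"
  assumes partial: "\<And>M. (\<Sum>i<M. a i) \<le> (\<Sum>i<M. b i)"
    and dec: "\<And>i. y (Suc i) \<le> y i" and nonneg: "\<And>i. 0 \<le> y i"
  shows "(\<Sum>i<L. a i * y i) \<le> (\<Sum>i<L. b i * y i)"
proof -
  define e where "e i = b i - a i" for i
  have E: "0 \<le> (\<Sum>i<M. e i)" for M using partial[of M] unfolding e_def by (simp add: sum_subtractf)
  have abel: "(\<Sum>i<M. e i) * y M \<le> (\<Sum>i<M. e i * y i)" for M
  proof (induction M)
    case 0 then show ?case by simp
  next
    case (Suc M)
    have "(\<Sum>i<Suc M. e i) * y (Suc M) \<le> (\<Sum>i<Suc M. e i) * y M"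
      using E[of "Suc M"] dec[of M] by (intro mult_left_mono) auto
    also have "\<dots> = (\<Sum>i<M. e i) * y M + e M * y M" by (simp add: algebra_simps)
    finally show ?case using Suc.IH by simp
  qed
  have "0 \<le> (\<Sum>i<L. e i * y i)" using abel[of L] E[of L] nonneg[of L] by (meson mult_nonneg_nonneg order_trans)
  then show ?thesis unfolding e_def by (simp add: sum_subtractf algebra_simps)
qed

lemma sum_lessThan_if_less_const: "(\<Sum>i<M. (if i < N then 1 else 0) :: real) = real (min M N)"
  by (induction M) (auto simp: min_def)

lemma sum_lessThan_if_less: "(N::nat) \<le> L \<Longrightarrow> (\<Sum>i<L. if i < N then f i else 0) = (\<Sum>i<N. (f i :: real))"
  by (induction L rule: dec_induct) auto

section \<open>Lorentz sequence spaces\<close>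

locale lorentz_weight =
  fixes w :: seq and p :: real
  assumes p_ge_1: "1 \<le> p" and w_0: "w 0 = 1" and w_Suc_le: "\<And>n. w (Suc n) \<le> w n"
    and w_tendsto_0: "w \<longlonglongrightarrow> 0" and w_not_summable: "\<not> summable w"
begin

text \<open>dnorm_pow x = \<Parallel>x\<Parallel>_{d_{w,p}}^p and lpnorm_pow x = \<Parallel>x\<Parallel>_p^p; all estimates are made for these.\<close>

definition dnorm_pow :: "seq \<Rightarrow> real" where
  "dnorm_pow x = (\<Sum>n. w n * rearr x n powr p)"

definition lpnorm_pow :: "seq \<Rightarrow> real" where
  "lpnorm_pow x = (\<Sum>k. \<bar>x k\<bar> powr p)"

lemma p_pos: "p > 0" using p_ge_1 by simp

lemma w_antimono: "m \<le> n \<Longrightarrow> w n \<le> w m"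
  using w_Suc_le by (simp add: decseq_SucI decseqD)

lemma w_nonneg: "0 \<le> w n"
  using decseq_ge[OF _ w_tendsto_0] w_Suc_le by (simp add: decseq_SucI)

lemma w_le_1: "w n \<le> 1" using w_antimono[of 0 n] w_0 by simp

lemma lorentz_norm_eq: "lorentz_norm w p x = dnorm_pow x powr (1/p)"
  unfolding lorentz_norm_def dnorm_pow_def by simp

lemma lp_norm_eq: "lp_norm p x = lpnorm_pow x powr (1/p)"
  unfolding lp_norm_def lpnorm_pow_def by simp

lemma mem_lorentz_space_iff:
  "x \<in> lorentz_space w p \<longleftrightarrow> x \<in> c0 \<and> summable (\<lambda>n. w n * rearr x n powr p)"
  unfolding lorentz_space_def by simp

lemma mem_lp_space_iff: "x \<in> lp_space p \<longleftrightarrow> summable (\<lambda>k. \<bar>x k\<bar> powr p)"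
  unfolding lp_space_def by simp

lemma lorentz_space_c0: "x \<in> lorentz_space w p \<Longrightarrow> x \<in> c0"
  by (simp add: mem_lorentz_space_iff)

lemma lorentz_term_nonneg: "0 \<le> w n * rearr x n powr p"
  using w_nonneg by simp

lemma dnorm_pow_nonneg: "x \<in> lorentz_space w p \<Longrightarrow> 0 \<le> dnorm_pow x"
  unfolding dnorm_pow_def mem_lorentz_space_iff
  by (auto intro!: suminf_nonneg simp: lorentz_term_nonneg)

lemma lpnorm_pow_nonneg: "x \<in> lp_space p \<Longrightarrow> 0 \<le> lpnorm_pow x"
  unfolding lpnorm_pow_def mem_lp_space_iff by (auto intro!: suminf_nonneg)

lemma lorentz_norm_le_1: "x \<in> lorentz_space w p \<Longrightarrow> dnorm_pow x \<le> 1 \<Longrightarrow> lorentz_norm w p x \<le> 1"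
  unfolding lorentz_norm_eq using dnorm_pow_nonneg p_pos by (intro powr_le1) auto

lemma dnorm_pow_tendsto_0:
  "(\<lambda>i. lorentz_norm w p (xs i)) \<longlonglongrightarrow> 0 \<Longrightarrow> (\<lambda>i. dnorm_pow (xs i)) \<longlonglongrightarrow> 0"
proof -
  assume a: "(\<lambda>i. lorentz_norm w p (xs i)) \<longlonglongrightarrow> 0"
  have "(\<lambda>i. (lorentz_norm w p (xs i)) powr p) \<longlonglongrightarrow> 0"
    by (rule tendsto_zero_powrI[OF a tendsto_const]) (use p_pos in \<open>auto simp: lorentz_norm_eq\<close>)
  moreover have "(lorentz_norm w p (xs i)) powr p = \<bar>dnorm_pow (xs i)\<bar>" for i
    unfolding lorentz_norm_eq using p_pos by (simp add: powr_powr)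
  ultimately show ?thesis by (simp add: tendsto_rabs_zero_iff)
qed

lemma abs_powr_le_dnorm_pow: "x \<in> lorentz_space w p \<Longrightarrow> \<bar>x k\<bar> powr p \<le> dnorm_pow x"
proof -
  assume x: "x \<in> lorentz_space w p"
  then have s: "summable (\<lambda>n. w n * rearr x n powr p)" and c: "x \<in> c0"
    by (auto simp: mem_lorentz_space_iff)
  have "\<bar>x k\<bar> powr p \<le> (\<Sum>n\<in>{0}. w n * rearr x n powr p)"
    using w_0 abs_le_rearr_0[OF c0_imp_bounded_seq[OF c], of k] p_pos by (simp add: powr_mono2)
  also have "\<dots> \<le> dnorm_pow x"
    unfolding dnorm_pow_def by (rule sum_le_suminf[OF s]) (auto simp: lorentz_term_nonneg)
  finally show ?thesis .
qed

lemma dnorm_pow_eq_0_imp: "x \<in> lorentz_space w p \<Longrightarrow> dnorm_pow x = 0 \<Longrightarrow> x = (\<lambda>k. 0)"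
  using abs_powr_le_dnorm_pow by fastforce

lemma zero_in_lorentz_space: "(\<lambda>k. 0) \<in> lorentz_space w p"
  and dnorm_pow_zero: "dnorm_pow (\<lambda>k. 0) = 0"
proof -
  have r: "rearr (\<lambda>k. 0) n = 0" for n
    by (rule rearr_eq_0_if_support[of _ "{}"]) (auto simp: bounded_seq_def)
  show "(\<lambda>k. 0) \<in> lorentz_space w p" unfolding mem_lorentz_space_iff c0_def by (simp add: r)
  show "dnorm_pow (\<lambda>k. 0) = 0" unfolding dnorm_pow_def by (simp add: r)
qed

lemma lorentz_space_dominated:
  assumes y: "y \<in> lorentz_space w p" and x: "x \<in> c0" and le: "\<And>k. \<bar>x k\<bar> \<le> \<bar>y k\<bar>"
  shows "x \<in> lorentz_space w p" "dnorm_pow x \<le> dnorm_pow y"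
proof -
  have sy: "summable (\<lambda>n. w n * rearr y n powr p)" and cy: "y \<in> c0"
    using y by (auto simp: mem_lorentz_space_iff)
  have le2: "w n * rearr x n powr p \<le> w n * rearr y n powr p" for n
    using rearr_mono[OF c0_imp_bounded_seq[OF cy] le, of n]
      rearr_nonneg[OF c0_imp_bounded_seq[OF x], of n] p_pos w_nonneg[of n]
    by (intro mult_left_mono powr_mono2) auto
  have sx: "summable (\<lambda>n. w n * rearr x n powr p)"
    by (rule summable_comparison_test'[OF sy, of 0]) (use le2 lorentz_term_nonneg in auto)
  show "x \<in> lorentz_space w p" using sx x by (simp add: mem_lorentz_space_iff)
  show "dnorm_pow x \<le> dnorm_pow y" unfolding dnorm_pow_def by (rule suminf_le[OF le2 sx sy])
qed

lemma lorentz_space_mult: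
  assumes x: "x \<in> lorentz_space w p"
  shows "(\<lambda>k. c * x k) \<in> lorentz_space w p" "dnorm_pow (\<lambda>k. c * x k) = \<bar>c\<bar> powr p * dnorm_pow x"
proof -
  have sx: "summable (\<lambda>n. w n * rearr x n powr p)" and cx: "x \<in> c0"
    using x by (auto simp: mem_lorentz_space_iff)
  have eq: "w n * rearr (\<lambda>k. c * x k) n powr p = \<bar>c\<bar> powr p * (w n * rearr x n powr p)" for n
    using rearr_mult[OF c0_imp_bounded_seq[OF cx], of c n]
      rearr_nonneg[OF c0_imp_bounded_seq[OF cx], of n]
    by (simp add: powr_mult)
  show "(\<lambda>k. c * x k) \<in> lorentz_space w p"
    using c0_mult[OF cx] summable_mult[OF sx, of "\<bar>c\<bar> powr p"] by (simp add: mem_lorentz_space_iff eq)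
  show "dnorm_pow (\<lambda>k. c * x k) = \<bar>c\<bar> powr p * dnorm_pow x"
    unfolding dnorm_pow_def eq using suminf_mult[OF sx] by simp
qed

lemma lorentz_term_add_le:
  assumes x: "bounded_seq x" and y: "bounded_seq y"
  shows "w m * rearr (\<lambda>k. x k + y k) m powr p
    \<le> 2 powr p * (w (m div 2) * rearr x (m div 2) powr p + w (m div 2) * rearr y (m div 2) powr p)"
proof -
  let ?h = "m div 2"
  have "rearr (\<lambda>k. x k + y k) m \<le> rearr (\<lambda>k. x k + y k) (?h + ?h)"
    by (rule rearr_antimono[OF bounded_seq_add[OF x y]]) auto
  also have "\<dots> \<le> rearr x ?h + rearr y ?h" by (rule rearr_add_le[OF x y])
  finally have "w m * rearr (\<lambda>k. x k + y k) m powr p \<le> w ?h * (rearr x ?h + rearr y ?h) powr p"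
    using w_antimono[of ?h m] w_nonneg[of m] rearr_nonneg[OF bounded_seq_add[OF x y], of m] p_pos
      rearr_nonneg[OF x, of ?h] rearr_nonneg[OF y, of ?h]
    by (intro mult_mono powr_mono2) auto
  also have "\<dots> \<le> w ?h * (2 powr p * (rearr x ?h powr p + rearr y ?h powr p))"
    using w_nonneg rearr_nonneg[OF x] rearr_nonneg[OF y] p_pos
    by (intro mult_left_mono add_powr_le_2_powr) auto
  finally show ?thesis by (simp add: algebra_simps)
qed

lemma lorentz_space_add:
  assumes x: "x \<in> lorentz_space w p" and y: "y \<in> lorentz_space w p"
  shows "(\<lambda>k. x k + y k) \<in> lorentz_space w p"
    "dnorm_pow (\<lambda>k. x k + y k) \<le> 4 powr p * (dnorm_pow x + dnorm_pow y)"
proof -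
  have sx: "summable (\<lambda>n. w n * rearr x n powr p)" and cx: "x \<in> c0"
    and sy: "summable (\<lambda>n. w n * rearr y n powr p)" and cy: "y \<in> c0"
    using x y by (auto simp: mem_lorentz_space_iff)
  define h where "h n = 2 powr p * (w n * rearr x n powr p + w n * rearr y n powr p)" for n
  have h_nonneg: "0 \<le> h n" for n
    unfolding h_def using lorentz_term_nonneg[of n x] lorentz_term_nonneg[of n y] by simp
  have sh: "summable h" unfolding h_def by (intro summable_mult summable_add sx sy)
  have "(\<Sum>m<N. w m * rearr (\<lambda>k. x k + y k) m powr p) \<le> 2 * suminf h" for N
  proof -
    have "(\<Sum>m<N. w m * rearr (\<lambda>k. x k + y k) m powr p) \<le> (\<Sum>m<N. h (m div 2))"
      unfolding h_def
      by (intro sum_mono lorentz_term_add_le c0_imp_bounded_seq cx cy)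
    also have "\<dots> \<le> (\<Sum>m<2*N. h (m div 2))" by (rule sum_mono2) (simp_all add: h_nonneg)
    also have "\<dots> = 2 * (\<Sum>n<N. h n)" by (rule sum_lessThan_double_div_2)
    also have "\<dots> \<le> 2 * suminf h" using sum_le_suminf[OF sh, of "{..<N}"] h_nonneg by simp
    finally show ?thesis .
  qed
  then have sum: "summable (\<lambda>m. w m * rearr (\<lambda>k. x k + y k) m powr p)"
    and le: "dnorm_pow (\<lambda>k. x k + y k) \<le> 2 * suminf h"
    using nonneg_partial_sums_bounded[of "\<lambda>m. w m * rearr (\<lambda>k. x k + y k) m powr p" "2 * suminf h"]
      lorentz_term_nonneg
    unfolding dnorm_pow_def by auto
  show "(\<lambda>k. x k + y k) \<in> lorentz_space w p"
    using sum c0_add[OF cx cy] unfolding mem_lorentz_space_iff by simp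
  have "suminf h = 2 powr p * (dnorm_pow x + dnorm_pow y)" unfolding h_def dnorm_pow_def
    using suminf_mult[OF summable_add[OF sx sy], of "2 powr p"] suminf_add[OF sx sy] by simp
  note le
  also have "2 * suminf h = (2 * 2 powr p) * (dnorm_pow x + dnorm_pow y)"
    using \<open>suminf h = _\<close> by simp
  also have "\<dots> \<le> 4 powr p * (dnorm_pow x + dnorm_pow y)"
    using two_mult_two_powr_le_four_powr[OF p_ge_1] dnorm_pow_nonneg[OF x] dnorm_pow_nonneg[OF y]
    by (intro mult_right_mono) auto
  finally show "dnorm_pow (\<lambda>k. x k + y k) \<le> 4 powr p * (dnorm_pow x + dnorm_pow y)" .
qed

lemma lorentz_space_diff:
  "x \<in> lorentz_space w p \<Longrightarrow> y \<in> lorentz_space w p \<Longrightarrow> (\<lambda>k. x k - y k) \<in> lorentz_space w p"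
  using lorentz_space_add(1)[OF _ lorentz_space_mult(1), of x y "-1"] by simp

lemma lp_space_subset_c0: "x \<in> lp_space p \<Longrightarrow> x \<in> c0"
proof -
  assume "x \<in> lp_space p"
  then have "(\<lambda>k. \<bar>x k\<bar> powr p) \<longlonglongrightarrow> 0" by (simp add: mem_lp_space_iff summable_LIMSEQ_zero)
  then have "(\<lambda>k. (\<bar>x k\<bar> powr p) powr (1/p)) \<longlonglongrightarrow> 0"
    by (rule tendsto_zero_powrI[OF _ tendsto_const]) (use p_pos in auto)
  then have "(\<lambda>k. \<bar>x k\<bar>) \<longlonglongrightarrow> 0" using p_pos by (simp add: powr_powr)
  then show "x \<in> c0" unfolding c0_def by (simp add: tendsto_rabs_zero_iff)
qed

lemma lp_space_subset_lorentz_space: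
  assumes x: "x \<in> lp_space p"
  shows "x \<in> lorentz_space w p" "dnorm_pow x \<le> lpnorm_pow x"
proof -
  have c: "x \<in> c0" by (rule lp_space_subset_c0[OF x])
  have "(\<Sum>n<N. w n * rearr x n powr p) \<le> lpnorm_pow x" for N
  proof -
    have "(\<Sum>n<N. w n * rearr x n powr p) \<le> (\<Sum>n<N. rearr x n powr p)"
      using w_le_1 w_nonneg by (intro sum_mono mult_left_le_one_le) auto
    also have "\<dots> \<le> lpnorm_pow x" unfolding lpnorm_pow_def
      using sum_rearr_powr_le_suminf[OF p_pos c] x by (simp add: mem_lp_space_iff)
    finally show ?thesis .
  qed
  then have "summable (\<lambda>n. w n * rearr x n powr p)" "dnorm_pow x \<le> lpnorm_pow x"
    using nonneg_partial_sums_bounded[of "\<lambda>n. w n * rearr x n powr p" "lpnorm_pow x"]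
      lorentz_term_nonneg
    unfolding dnorm_pow_def by auto
  then show "x \<in> lorentz_space w p" "dnorm_pow x \<le> lpnorm_pow x"
    using c by (auto simp: mem_lorentz_space_iff)
qed

end

section \<open>Bounded operators\<close>

definition seq_linear_on :: "seq set \<Rightarrow> (seq \<Rightarrow> seq) \<Rightarrow> bool" where
  "seq_linear_on X T \<longleftrightarrow>
     (\<forall>x\<in>X. \<forall>y\<in>X. \<forall>a b::real. T (\<lambda>k. a * x k + b * y k) = (\<lambda>k. a * T x k + b * T y k))"

lemma seq_linear_on_zero: "seq_linear_on X T \<Longrightarrow> x \<in> X \<Longrightarrow> T (\<lambda>k. 0) = (\<lambda>k. 0)"
  unfolding seq_linear_on_def by (drule bspec, assumption, drule bspec, assumption)
    (drule spec[of _ 0], drule spec[of _ 0], simp)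

lemma seq_linear_on_mult: "seq_linear_on X T \<Longrightarrow> x \<in> X \<Longrightarrow> T (\<lambda>k. c * x k) = (\<lambda>k. c * T x k)"
  unfolding seq_linear_on_def by (drule bspec, assumption, drule bspec, assumption)
    (drule spec[of _ c], drule spec[of _ 0], simp)

lemma seq_linear_on_subset: "seq_linear_on X T \<Longrightarrow> Y \<subseteq> X \<Longrightarrow> seq_linear_on Y T"
  unfolding seq_linear_on_def by blast

text \<open>Both norms are p-th roots, so boundedness can be stated for their p-th powers.\<close>

lemma bounded_op_powr_normI:
  assumes "p > 0" "\<And>x. x \<in> X \<Longrightarrow> T x \<in> Y" "seq_linear_on X T" "\<And>x. x \<in> X \<Longrightarrow> 0 \<le> FX x"
    "\<And>x. x \<in> X \<Longrightarrow> 0 \<le> FY (T x)" "K \<ge> 0" "\<And>x. x \<in> X \<Longrightarrow> FY (T x) \<le> K * FX x"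
  shows "bounded_op X (\<lambda>x. FX x powr (1/p)) Y (\<lambda>y. FY y powr (1/p)) T"
  unfolding bounded_op_def
proof (intro conjI)
  show "\<forall>x\<in>X. T x \<in> Y" using assms by auto
  show "\<forall>x\<in>X. \<forall>y\<in>X. \<forall>a b. T (\<lambda>k. a * x k + b * y k) = (\<lambda>k. a * T x k + b * T y k)"
    using assms(3) unfolding seq_linear_on_def by blast
  show "\<exists>C. \<forall>x\<in>X. FY (T x) powr (1 / p) \<le> C * FX x powr (1 / p)"
    using assms by (intro exI[of _ "K powr (1/p)"]) (auto intro: powr_inverse_le_mult)
qed

lemma bounded_op_powr_normD:
  assumes b: "bounded_op X (\<lambda>x. FX x powr (1/p)) Y (\<lambda>y. FY y powr (1/p)) T" and p: "p > 0"
    and FX: "\<And>x. x \<in> X \<Longrightarrow> 0 \<le> FX x" and FY: "\<And>y. y \<in> Y \<Longrightarrow> 0 \<le> FY y"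
  shows "\<And>x. x \<in> X \<Longrightarrow> T x \<in> Y" "seq_linear_on X T" "\<exists>K>0. \<forall>x\<in>X. FY (T x) \<le> K * FX x"
proof -
  show T: "\<And>x. x \<in> X \<Longrightarrow> T x \<in> Y" using b unfolding bounded_op_def by auto
  show "seq_linear_on X T" using b unfolding bounded_op_def seq_linear_on_def by auto
  obtain C where C: "\<forall>x\<in>X. FY (T x) powr (1/p) \<le> C * FX x powr (1/p)"
    using b unfolding bounded_op_def by auto
  have "FY (T x) \<le> (max C 1) powr p * FX x" if x: "x \<in> X" for x
  proof (rule powr_inverse_le_mult_imp_le)
    show "FY (T x) powr (1/p) \<le> max C 1 * FX x powr (1/p)"
      using C x by (meson max.cobounded1 mult_right_mono order_trans powr_ge_zero)
  qed (use p FX[OF x] FY[OF T[OF x]] in auto)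
  then show "\<exists>K>0. \<forall>x\<in>X. FY (T x) \<le> K * FX x" by (intro exI[of _ "(max C 1) powr p"]) auto
qed

context lorentz_weight
begin

lemma lorentz_norm_fun: "lorentz_norm w p = (\<lambda>x. dnorm_pow x powr (1/p))"
  using lorentz_norm_eq by auto

lemma lp_norm_fun: "lp_norm p = (\<lambda>x. lpnorm_pow x powr (1/p))"
  using lp_norm_eq by auto

lemma mem_LdD:
  assumes "T \<in> Ld w p"
  shows "\<And>x. x \<in> lorentz_space w p \<Longrightarrow> T x \<in> lorentz_space w p"
    "seq_linear_on (lorentz_space w p) T"
    "\<exists>K>0. \<forall>x\<in>lorentz_space w p. dnorm_pow (T x) \<le> K * dnorm_pow x"
  using bounded_op_powr_normD[of "lorentz_space w p" dnorm_pow p "lorentz_space w p" dnorm_pow T]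
    assms p_pos dnorm_pow_nonneg
  unfolding Ld_def lorentz_norm_fun by auto

lemma mem_LdI:
  assumes "\<And>x. x \<in> lorentz_space w p \<Longrightarrow> T x \<in> lorentz_space w p"
    "seq_linear_on (lorentz_space w p) T"
    "K \<ge> 0" "\<And>x. x \<in> lorentz_space w p \<Longrightarrow> dnorm_pow (T x) \<le> K * dnorm_pow x"
  shows "T \<in> Ld w p"
  unfolding Ld_def lorentz_norm_fun using assms p_pos dnorm_pow_nonneg
  by (auto intro!: bounded_op_powr_normI)

lemma bounded_op_lorentz_lpD:
  assumes "bounded_op (lorentz_space w p) (lorentz_norm w p) (lp_space p) (lp_norm p) B"
  shows "\<And>x. x \<in> lorentz_space w p \<Longrightarrow> B x \<in> lp_space p" "seq_linear_on (lorentz_space w p) B"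
    "\<exists>K>0. \<forall>x\<in>lorentz_space w p. lpnorm_pow (B x) \<le> K * dnorm_pow x"
  using bounded_op_powr_normD[of "lorentz_space w p" dnorm_pow p "lp_space p" lpnorm_pow B]
    assms p_pos dnorm_pow_nonneg lpnorm_pow_nonneg
  unfolding lorentz_norm_fun lp_norm_fun by auto

lemma bounded_op_lorentz_lpI:
  assumes "\<And>x. x \<in> lorentz_space w p \<Longrightarrow> B x \<in> lp_space p" "seq_linear_on (lorentz_space w p) B"
    "K \<ge> 0" "\<And>x. x \<in> lorentz_space w p \<Longrightarrow> lpnorm_pow (B x) \<le> K * dnorm_pow x"
  shows "bounded_op (lorentz_space w p) (lorentz_norm w p) (lp_space p) (lp_norm p) B"
  unfolding lorentz_norm_fun lp_norm_fun using assms p_pos dnorm_pow_nonneg lpnorm_pow_nonneg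
  by (auto intro!: bounded_op_powr_normI)

lemma bounded_op_lp_lorentzI:
  assumes "\<And>x. x \<in> lp_space p \<Longrightarrow> B x \<in> lorentz_space w p" "seq_linear_on (lp_space p) B"
    "K \<ge> 0" "\<And>x. x \<in> lp_space p \<Longrightarrow> dnorm_pow (B x) \<le> K * lpnorm_pow x"
  shows "bounded_op (lp_space p) (lp_norm p) (lorentz_space w p) (lorentz_norm w p) B"
  unfolding lorentz_norm_fun lp_norm_fun using assms p_pos dnorm_pow_nonneg lpnorm_pow_nonneg
  by (auto intro!: bounded_op_powr_normI)

lemma J_j_subset_J_lp: "J_j w p \<subseteq> J_lp w p"
proof
  fix S assume "S \<in> J_j w p"
  then obtain A B where S: "S \<in> Ld w p" and A: "A \<in> Ld w p"
    and B: "bounded_op (lorentz_space w p) (lorentz_norm w p) (lp_space p) (lp_norm p) B"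
    and S_eq: "\<forall>x\<in>lorentz_space w p. S x = A (jmap (B x))" unfolding J_j_def by auto
  obtain K where K: "K > 0" "\<forall>x\<in>lorentz_space w p. dnorm_pow (A x) \<le> K * dnorm_pow x"
    using mem_LdD(3)[OF A] by auto
  have "bounded_op (lp_space p) (lp_norm p) (lorentz_space w p) (lorentz_norm w p) A"
  proof (rule bounded_op_lp_lorentzI[where K=K])
    show "A x \<in> lorentz_space w p" if "x \<in> lp_space p" for x
      using mem_LdD(1)[OF A] lp_space_subset_lorentz_space(1) that by auto
    show "seq_linear_on (lp_space p) A"
      by (rule seq_linear_on_subset[OF mem_LdD(2)[OF A]]) (use lp_space_subset_lorentz_space in auto)
    show "dnorm_pow (A x) \<le> K * lpnorm_pow x" if x: "x \<in> lp_space p" for x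
      using K lp_space_subset_lorentz_space[OF x] by (auto intro: order_trans mult_left_mono)
  qed (use K in simp)
  then show "S \<in> J_lp w p" unfolding J_lp_def using S B S_eq by (auto simp: jmap_def)
qed

lemma bounded_lorentz_lp_in_J_j:
  assumes B: "bounded_op (lorentz_space w p) (lorentz_norm w p) (lp_space p) (lp_norm p) B"
  shows "B \<in> J_j w p"
proof -
  note B_lp = bounded_op_lorentz_lpD[OF B]
  obtain K where K: "K > 0" "\<forall>x\<in>lorentz_space w p. lpnorm_pow (B x) \<le> K * dnorm_pow x"
    using B_lp(3) by auto
  have "B \<in> Ld w p"
  proof (rule mem_LdI[OF _ B_lp(2), of K])
    fix x assume x: "x \<in> lorentz_space w p"
    show "B x \<in> lorentz_space w p" using lp_space_subset_lorentz_space(1)[OF B_lp(1)[OF x]] .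
    show "dnorm_pow (B x) \<le> K * dnorm_pow x"
      using lp_space_subset_lorentz_space(2)[OF B_lp(1)[OF x]] K x by (auto intro: order_trans)
  qed (use K in simp)
  moreover have "(\<lambda>x. x) \<in> Ld w p" by (rule mem_LdI[of _ 1]) (auto simp: seq_linear_on_def)
  ultimately show ?thesis unfolding J_j_def using B by (auto simp: jmap_def)
qed

lemma J_j_subset_Ld: "J_j w p \<subseteq> Ld w p"
  unfolding J_j_def by auto

lemma subset_op_closure: "S \<in> \<J> \<Longrightarrow> \<J> \<subseteq> Ld w p \<Longrightarrow> S \<in> op_closure w p \<J>"
  unfolding op_closure_def
  by (auto intro!: bexI[of _ S] simp: lorentz_norm_eq dnorm_pow_zero)

end

section \<open>Compact operators are norm limits of operators factoring through j\<close>

definition seq_trunc :: "nat \<Rightarrow> seq \<Rightarrow> seq" where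
  "seq_trunc N z = (\<lambda>k. if k < N then z k else 0)"

definition seq_tail :: "nat \<Rightarrow> seq \<Rightarrow> seq" where
  "seq_tail N z = (\<lambda>k. if k < N then 0 else z k)"

context lorentz_weight
begin

lemma seq_tail_in_lorentz_space:
  assumes z: "z \<in> lorentz_space w p"
  shows "seq_tail N z \<in> lorentz_space w p" "dnorm_pow (seq_tail N z) \<le> dnorm_pow z"
proof -
  have "seq_tail N z \<in> c0"
    by (rule c0_eventually_dominated[OF lorentz_space_c0[OF z], of 0]) (auto simp: seq_tail_def)
  then show "seq_tail N z \<in> lorentz_space w p" "dnorm_pow (seq_tail N z) \<le> dnorm_pow z"
    using lorentz_space_dominated[OF z] by (auto simp: seq_tail_def)
qed

lemma seq_trunc_in_lp_space:
  assumes z: "z \<in> lorentz_space w p"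
  shows "seq_trunc N z \<in> lp_space p" "lpnorm_pow (seq_trunc N z) \<le> real N * dnorm_pow z"
proof -
  have fin: "\<And>k. k \<notin> {..<N} \<Longrightarrow> \<bar>seq_trunc N z k\<bar> powr p = 0" by (auto simp: seq_trunc_def)
  show "seq_trunc N z \<in> lp_space p"
    unfolding mem_lp_space_iff by (rule summable_finite[of "{..<N}"]) (use fin in auto)
  have "lpnorm_pow (seq_trunc N z) = (\<Sum>k<N. \<bar>z k\<bar> powr p)"
    unfolding lpnorm_pow_def by (subst suminf_finite[of "{..<N}"]) (use fin in \<open>auto simp: seq_trunc_def\<close>)
  also have "\<dots> \<le> (\<Sum>k<N. dnorm_pow z)" by (intro sum_mono abs_powr_le_dnorm_pow[OF z])
  finally show "lpnorm_pow (seq_trunc N z) \<le> real N * dnorm_pow z" by simp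
qed

text \<open>Small on the first M coordinates because z \<in> c0, small beyond M by the tail of the series.\<close>

lemma dnorm_pow_seq_tail_tendsto_0:
  assumes z: "z \<in> lorentz_space w p"
  shows "(\<lambda>N. dnorm_pow (seq_tail N z)) \<longlonglongrightarrow> 0"
proof (rule LIMSEQ_I)
  fix r :: real assume r: "r > 0"
  have sz: "summable (\<lambda>n. w n * rearr z n powr p)" and cz: "z \<in> c0"
    using z by (auto simp: mem_lorentz_space_iff)
  obtain M where M: "norm (\<Sum>i. w (i + M) * rearr z (i + M) powr p) < r/2"
    using suminf_exist_split[of "r/2", OF _ sz] r by auto
  define \<delta> where "\<delta> = (r / (2 * (real M + 1))) powr (1/p)"
  have \<delta>: "\<delta> > 0" "\<delta> powr p = r / (2 * (real M + 1))"
    unfolding \<delta>_def using r p_pos by (auto simp: powr_powr)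
  have "(\<lambda>k. \<bar>z k\<bar>) \<longlonglongrightarrow> 0" using cz unfolding c0_def by (simp add: tendsto_rabs_zero_iff)
  then obtain N0 where N0: "\<And>k. k \<ge> N0 \<Longrightarrow> \<bar>z k\<bar> < \<delta>" using \<delta>(1) by (auto simp: LIMSEQ_iff)
  show "\<exists>N0. \<forall>N\<ge>N0. norm (dnorm_pow (seq_tail N z) - 0) < r"
  proof (intro exI allI impI)
    fix N assume N: "N \<ge> N0"
    note t = seq_tail_in_lorentz_space[OF z, of N]
    have bt: "bounded_seq (seq_tail N z)" by (intro c0_imp_bounded_seq lorentz_space_c0 t)
    define g where "g n = w n * rearr (seq_tail N z) n powr p" for n
    have sg: "summable g" using t unfolding g_def by (simp add: mem_lorentz_space_iff)
    have "dnorm_pow (seq_tail N z) = (\<Sum>n. g (n + M)) + (\<Sum>i<M. g i)"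
      unfolding dnorm_pow_def g_def[symmetric] by (rule suminf_split_initial_segment[OF sg])
    also have "(\<Sum>i<M. g i) \<le> (\<Sum>i<M. \<delta> powr p)"
    proof (intro sum_mono)
      fix i
      have "rearr (seq_tail N z) i \<le> \<delta>"
        by (rule rearr_le_bound[OF bt]) (use N0 N \<delta> in \<open>auto simp: seq_tail_def less_imp_le\<close>)
      then have "rearr (seq_tail N z) i powr p \<le> \<delta> powr p"
        using p_pos rearr_nonneg[OF bt] by (intro powr_mono2) auto
      then show "g i \<le> \<delta> powr p" unfolding g_def using w_le_1[of i] w_nonneg[of i]
        by (meson mult_left_le_one_le order_trans powr_ge_zero)
    qed
    also have "(\<Sum>n. g (n + M)) \<le> (\<Sum>n. w (n + M) * rearr z (n + M) powr p)"
    proof (rule suminf_le)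
      fix n show "g (n + M) \<le> w (n + M) * rearr z (n + M) powr p"
        unfolding g_def using rearr_nonneg[OF bt, of "n+M"] p_pos
          rearr_mono[OF c0_imp_bounded_seq[OF cz], of "seq_tail N z" "n + M"]
        by (intro mult_left_mono powr_mono2 w_nonneg) (auto simp: seq_tail_def)
    qed (intro summable_ignore_initial_segment sg sz)+
    also have "(\<Sum>n. w (n + M) * rearr z (n + M) powr p) < r/2" using M by simp
    also have "(\<Sum>i<M. \<delta> powr p) < r/2" using r by (simp add: \<delta>(2) field_simps)
    finally show "norm (dnorm_pow (seq_tail N z) - 0) < r" using dnorm_pow_nonneg[OF t(1)] by simp
  qed
qed

lemma compact_op_tails_uniformly_small:
  assumes T: "T \<in> compact_ops w p" and \<eta>: "\<eta> > 0"
  shows "\<exists>N. \<forall>x\<in>lorentz_space w p. dnorm_pow x \<le> 1 \<longrightarrow> dnorm_pow (seq_tail N (T x)) \<le> \<eta>"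
proof (rule ccontr)
  assume "\<not> ?thesis"
  then obtain xs where xs: "\<And>N. xs N \<in> lorentz_space w p" "\<And>N. dnorm_pow (xs N) \<le> 1"
    "\<And>N. dnorm_pow (seq_tail N (T (xs N))) > \<eta>"
    by (metis not_le)
  have "\<forall>i. xs i \<in> lorentz_space w p \<and> lorentz_norm w p (xs i) \<le> 1"
    using xs(1,2) lorentz_norm_le_1 by blast
  then obtain r y where r: "strict_mono r" and y: "y \<in> lorentz_space w p"
    and lim: "(\<lambda>i. lorentz_norm w p (\<lambda>k. T (xs (r i)) k - y k)) \<longlonglongrightarrow> 0"
    using T unfolding compact_ops_def by blast
  have "(\<lambda>i. 4 powr p * (dnorm_pow (\<lambda>k. T (xs (r i)) k - y k) + dnorm_pow (seq_tail (r i) y))) \<longlonglongrightarrow> 0"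
    using tendsto_mult_right_zero[OF tendsto_add_zero[OF dnorm_pow_tendsto_0[OF lim]
        LIMSEQ_subseq_LIMSEQ[OF dnorm_pow_seq_tail_tendsto_0[OF y] r]]]
    by (simp add: comp_def)
  from order_tendstoD(2)[OF this \<eta>] obtain i where
    i: "4 powr p * (dnorm_pow (\<lambda>k. T (xs (r i)) k - y k) + dnorm_pow (seq_tail (r i) y)) < \<eta>"
    using eventually_happens'[OF trivial_limit_sequentially] by blast
  define u where "u = (\<lambda>k. T (xs (r i)) k - y k)"
  have Tx: "T (xs (r i)) \<in> lorentz_space w p"
    using T xs(1) mem_LdD(1) unfolding compact_ops_def by blast
  have u: "u \<in> lorentz_space w p" unfolding u_def by (rule lorentz_space_diff[OF Tx y])
  have "seq_tail (r i) (T (xs (r i))) = (\<lambda>k. seq_tail (r i) u k + seq_tail (r i) y k)"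
    unfolding u_def seq_tail_def by auto
  then have "dnorm_pow (seq_tail (r i) (T (xs (r i))))
      \<le> 4 powr p * (dnorm_pow (seq_tail (r i) u) + dnorm_pow (seq_tail (r i) y))"
    using lorentz_space_add(2)[OF seq_tail_in_lorentz_space(1)[OF u] seq_tail_in_lorentz_space(1)[OF y]]
    by simp
  also have "\<dots> \<le> 4 powr p * (dnorm_pow u + dnorm_pow (seq_tail (r i) y))"
    using seq_tail_in_lorentz_space(2)[OF u] by (intro mult_left_mono) auto
  also have "\<dots> < \<eta>" using i unfolding u_def .
  finally show False using xs(3)[of "r i"] by simp
qed

text \<open>Homogeneity turns a bound on the unit ball into a bound everywhere.\<close>

lemma dnorm_pow_bound_from_unit_ball:
  assumes U: "\<And>x. x \<in> lorentz_space w p \<Longrightarrow> U x \<in> lorentz_space w p"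
    "seq_linear_on (lorentz_space w p) U"
    and unit: "\<And>x. x \<in> lorentz_space w p \<Longrightarrow> dnorm_pow x \<le> 1 \<Longrightarrow> dnorm_pow (U x) \<le> \<eta>"
    and x: "x \<in> lorentz_space w p"
  shows "dnorm_pow (U x) \<le> \<eta> * dnorm_pow x"
proof (cases "dnorm_pow x = 0")
  case True
  then have "U x = (\<lambda>k. 0)"
    using dnorm_pow_eq_0_imp[OF x] seq_linear_on_zero[OF U(2) zero_in_lorentz_space] by simp
  then show ?thesis using True by (simp add: dnorm_pow_zero)
next
  case False
  then have pos: "dnorm_pow x > 0" using dnorm_pow_nonneg[OF x] by simp
  define c where "c = dnorm_pow x powr (-1/p)"
  have "c powr p = dnorm_pow x powr (-1/p * p)" unfolding c_def by (rule powr_powr)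
  then have c: "c > 0" "c powr p = 1 / dnorm_pow x"
    unfolding c_def using pos p_pos by (auto simp: powr_minus_divide)
  have cx: "(\<lambda>k. c * x k) \<in> lorentz_space w p" "dnorm_pow (\<lambda>k. c * x k) = 1"
    using lorentz_space_mult[OF x, of c] c pos by auto
  have "c powr p * dnorm_pow (U x) = dnorm_pow (U (\<lambda>k. c * x k))"
    using lorentz_space_mult(2)[OF U(1)[OF x], of c] c(1)
    by (simp add: seq_linear_on_mult[OF U(2) x])
  also have "\<dots> \<le> \<eta>" using unit[OF cx(1)] cx(2) by simp
  finally show ?thesis using pos c(2) by (simp add: divide_le_eq mult.commute)
qed

lemma truncated_op_in_J_j:
  assumes T: "T \<in> Ld w p"
  shows "(\<lambda>x. seq_trunc N (T x)) \<in> J_j w p"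
proof (rule bounded_lorentz_lp_in_J_j)
  obtain K where K: "K > 0" "\<forall>x\<in>lorentz_space w p. dnorm_pow (T x) \<le> K * dnorm_pow x"
    using mem_LdD(3)[OF T] by auto
  show "bounded_op (lorentz_space w p) (lorentz_norm w p) (lp_space p) (lp_norm p)
      (\<lambda>x. seq_trunc N (T x))"
  proof (rule bounded_op_lorentz_lpI[of _ "real N * K"])
    fix x assume x: "x \<in> lorentz_space w p"
    note Tx = seq_trunc_in_lp_space[OF mem_LdD(1)[OF T x], of N]
    show "seq_trunc N (T x) \<in> lp_space p" using Tx(1) .
    have "lpnorm_pow (seq_trunc N (T x)) \<le> real N * dnorm_pow (T x)" by (rule Tx(2))
    also have "\<dots> \<le> real N * (K * dnorm_pow x)" using K x by (intro mult_left_mono) auto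
    finally show "lpnorm_pow (seq_trunc N (T x)) \<le> real N * K * dnorm_pow x" by (simp add: mult.assoc)
  next
    show "seq_linear_on (lorentz_space w p) (\<lambda>x. seq_trunc N (T x))"
      using mem_LdD(2)[OF T] unfolding seq_linear_on_def seq_trunc_def by auto
  qed (use K in simp)
qed

lemma compact_ops_subset_closure_J_j: "compact_ops w p \<subseteq> op_closure w p (J_j w p)"
proof
  fix T assume Tc: "T \<in> compact_ops w p"
  then have T: "T \<in> Ld w p" unfolding compact_ops_def by auto
  show "T \<in> op_closure w p (J_j w p)" unfolding op_closure_def
  proof (intro CollectI conjI allI impI T)
    fix \<epsilon> :: real assume \<epsilon>: "\<epsilon> > 0"
    obtain N where N: "\<And>x. x \<in> lorentz_space w p \<Longrightarrow> dnorm_pow x \<le> 1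
        \<Longrightarrow> dnorm_pow (seq_tail N (T x)) \<le> \<epsilon> powr p"
      using compact_op_tails_uniformly_small[OF Tc, of "\<epsilon> powr p"] \<epsilon> by auto
    have approx: "lorentz_norm w p (\<lambda>k. T x k - seq_trunc N (T x) k) \<le> \<epsilon> * lorentz_norm w p x"
      if x: "x \<in> lorentz_space w p" for x
    proof -
      have "dnorm_pow (seq_tail N (T x)) \<le> \<epsilon> powr p * dnorm_pow x"
        using mem_LdD[OF T] seq_tail_in_lorentz_space N x
        by (intro dnorm_pow_bound_from_unit_ball)
          (auto simp: seq_linear_on_def seq_tail_def fun_eq_iff)
      moreover have "(\<lambda>k. T x k - seq_trunc N (T x) k) = seq_tail N (T x)"
        by (auto simp: seq_trunc_def seq_tail_def)
      ultimately show ?thesis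
        using powr_inverse_le_mult[of p _ "dnorm_pow x" "\<epsilon> powr p"] p_pos \<epsilon> x dnorm_pow_nonneg
          seq_tail_in_lorentz_space(1)[OF mem_LdD(1)[OF T x]]
        by (simp add: lorentz_norm_eq powr_powr)
    qed
    show "\<exists>T'\<in>J_j w p. \<forall>x\<in>lorentz_space w p.
        lorentz_norm w p (\<lambda>k. T x k - T' x k) \<le> \<epsilon> * lorentz_norm w p x"
      using approx by (intro bexI[OF _ truncated_op_in_J_j[OF T, of N]] ballI)
  qed
qed

end

section \<open>Operators factoring through j are strictly singular\<close>

lemma underdetermined_linear_system:
  fixes z :: "nat \<Rightarrow> seq"
  shows "finite K \<Longrightarrow> finite I \<Longrightarrow> card K < card I \<Longrightarrow>
    \<exists>c. (\<exists>i\<in>I. c i \<noteq> 0) \<and> (\<forall>k\<in>K. (\<Sum>i\<in>I. c i * z i k) = 0)"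
proof (induction K arbitrary: I z rule: finite_induct)
  case empty
  then obtain i where "i \<in> I" by fastforce
  then show ?case by (intro exI[of _ "\<lambda>_. 1"]) auto
next
  case (insert k0 K)
  show ?case
  proof (cases "\<forall>i\<in>I. z i k0 = 0")
    case True
    then show ?thesis using insert.IH[OF insert.prems(1), of z] insert.hyps insert.prems by auto
  next
    case False
    \<comment> \<open>Gaussian elimination: eliminate the equation for k0 using a pivot j.\<close>
    then obtain j where j: "j \<in> I" "z j k0 \<noteq> 0" by auto
    define I' where "I' = I - {j}"
    define z' where "z' i = (\<lambda>k. z i k - (z i k0 / z j k0) * z j k)" for i
    have I': "finite I'" "card K < card I'"
      using insert j unfolding I'_def by (auto simp: card_Diff_singleton)
    obtain c' where c': "\<exists>i\<in>I'. c' i \<noteq> 0" "\<forall>k\<in>K. (\<Sum>i\<in>I'. c' i * z' i k) = 0"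
      using insert.IH[OF I'] by blast
    define c where "c i = (if i = j then - (\<Sum>i'\<in>I'. c' i' * z i' k0) / z j k0 else c' i)" for i
    have sum_c: "(\<Sum>i\<in>I. c i * z i k) = c j * z j k + (\<Sum>i\<in>I'. c' i * z i k)" for k
    proof -
      have "(\<Sum>i\<in>I'. c i * z i k) = (\<Sum>i\<in>I'. c' i * z i k)"
        unfolding c_def I'_def by (intro sum.cong) auto
      then show ?thesis unfolding I'_def using insert.prems(1) j(1) by (simp add: sum.remove)
    qed
    have "(\<Sum>i\<in>I. c i * z i k) = (\<Sum>i\<in>I'. c' i * z' i k)" for k
    proof -
      have "(\<Sum>i\<in>I'. c' i * z' i k)
          = (\<Sum>i\<in>I'. c' i * z i k) - (\<Sum>i\<in>I'. c' i * z i k0) / z j k0 * z j k"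
        unfolding z'_def
        by (simp add: algebra_simps sum_subtractf sum_distrib_left sum_divide_distrib sum_distrib_right)
      then show ?thesis using sum_c[of k] by (simp add: c_def algebra_simps)
    qed
    moreover have "(\<Sum>i\<in>I. c i * z i k0) = 0" using sum_c[of k0] j(2) by (simp add: c_def)
    moreover have "\<exists>i\<in>I. c i \<noteq> 0" using c'(1) unfolding I'_def c_def by auto
    ultimately show ?thesis using c'(2) by (intro exI[of _ c]) auto
  qed
qed

text \<open>Where no coordinate of y + t v has reached modulus 1 outside F, a little more of v can still
  be added; the decay of y provides the room at all but finitely many coordinates.\<close>

lemma c0_room_below_1:
  assumes y: "y \<in> c0" and lt: "\<And>k. k \<notin> F \<Longrightarrow> \<bar>y k\<bar> < 1" and v: "bounded_seq v"
  shows "\<exists>e>0. \<forall>k. k \<notin> F \<longrightarrow> \<bar>y k + e * v k\<bar> \<le> 1"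
proof -
  obtain B where B: "B \<ge> 1" "\<And>k. \<bar>v k\<bar> \<le> B"
    using v unfolding bounded_seq_def by (meson linorder_le_cases order_trans)
  have "(\<lambda>k. \<bar>y k\<bar>) \<longlonglongrightarrow> 0" using y unfolding c0_def by (simp add: tendsto_rabs_zero_iff)
  from order_tendstoD(2)[OF this, of "1/2"] obtain N where N: "\<And>k. k \<ge> N \<Longrightarrow> \<bar>y k\<bar> < 1/2"
    by (auto simp: eventually_sequentially)
  define m where "m = Max (insert 0 ((\<lambda>k. \<bar>y k\<bar>) ` {k. k < N \<and> k \<notin> F}))"
  have m: "m < 1" unfolding m_def using lt by (subst Max_less_iff) auto
  have le_m: "k < N \<Longrightarrow> k \<notin> F \<Longrightarrow> \<bar>y k\<bar> \<le> m" for k unfolding m_def by (rule Max_ge) auto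
  define e where "e = min (1 / (2 * B)) ((1 - m) / B)"
  have e: "e > 0" "e * B \<le> 1/2" "e * B \<le> 1 - m"
    unfolding e_def using B m by (auto simp: min_def field_simps)
  have "\<bar>y k + e * v k\<bar> \<le> 1" if "k \<notin> F" for k
  proof -
    have "\<bar>e * v k\<bar> \<le> e * B" using B(2)[of k] e(1) by (simp add: abs_mult mult_left_mono)
    then have "\<bar>y k + e * v k\<bar> \<le> \<bar>y k\<bar> + e * B" using abs_triangle_ineq[of "y k" "e * v k"] by linarith
    then show ?thesis using that e le_m[of k] N[of k] by (cases "k < N") auto
  qed
  then show ?thesis using e(1) by blast
qed

lemma c0_push_to_new_peak:
  assumes y: "y \<in> c0" "\<And>k. \<bar>y k\<bar> \<le> 1" and v: "v \<in> c0" "v k1 \<noteq> 0" "\<And>k. k \<in> F \<Longrightarrow> v k = 0"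
  shows "\<exists>t. (\<forall>k. \<bar>y k + t * v k\<bar> \<le> 1) \<and> (\<exists>k. k \<notin> F \<and> \<bar>y k + t * v k\<bar> = 1)"
proof -
  define TS where "TS = {t::real. 0 \<le> t \<and> (\<forall>k. \<bar>y k + t * v k\<bar> \<le> 1)}"
  have TS_iff: "t \<in> TS \<longleftrightarrow> 0 \<le> t \<and> (\<forall>k. \<bar>y k + t * v k\<bar> \<le> 1)" for t unfolding TS_def by simp
  have TS0: "0 \<in> TS" unfolding TS_iff using y(2) by auto
  have "t \<le> 2 / \<bar>v k1\<bar>" if "t \<in> TS" for t
  proof -
    have "t * \<bar>v k1\<bar> \<le> \<bar>y k1 + t * v k1\<bar> + \<bar>y k1\<bar>"
      using that abs_triangle_ineq4[of "y k1 + t * v k1" "y k1"] unfolding TS_iff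
      by (auto simp: abs_mult)
    also have "\<dots> \<le> 2" using that y(2)[of k1] unfolding TS_iff by (fastforce dest: spec[of _ k1])
    finally show ?thesis using v(2) by (simp add: field_simps)
  qed
  then have bdd: "bdd_above TS" by (intro bdd_aboveI) auto
  have "closed TS" unfolding TS_def
    by (intro closed_Collect_conj closed_Collect_all closed_Collect_le continuous_intros)
  then have ts: "Sup TS \<in> TS" using closed_contains_Sup[OF _ bdd] TS0 by blast
  define y' where "y' = (\<lambda>k. y k + Sup TS * v k)"
  have "\<exists>k. k \<notin> F \<and> \<bar>y' k\<bar> = 1"
  proof (rule ccontr)
    assume no_peak: "\<not> ?thesis"
    have "\<bar>y' k\<bar> \<le> 1" for k using ts unfolding TS_iff y'_def by blast
    then have "\<And>k. k \<notin> F \<Longrightarrow> \<bar>y' k\<bar> < 1" using no_peak by (auto simp: less_le)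
    moreover have "y' \<in> c0" unfolding y'_def by (intro c0_add c0_mult y v)
    ultimately obtain e where e: "e > 0" "\<And>k. k \<notin> F \<Longrightarrow> \<bar>y' k + e * v k\<bar> \<le> 1"
      using c0_room_below_1 c0_imp_bounded_seq[OF v(1)] by blast
    have "\<bar>y k + (Sup TS + e) * v k\<bar> \<le> 1" for k
      using e(2)[of k] v(3)[of k] y(2)[of k] unfolding y'_def
      by (cases "k \<in> F") (auto simp: algebra_simps)
    then have "Sup TS + e \<in> TS" using ts e(1) unfolding TS_iff by simp
    then show False using cSup_upper[OF _ bdd] e(1) by fastforce
  qed
  then show ?thesis using ts unfolding TS_iff y'_def by blast
qed

text \<open>Induction on m: move along a vector vanishing on the current peaks until one more coordinate
  reaches modulus 1.\<close>

lemma exists_peaked_vector: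
  fixes V :: "seq set"
  assumes zero: "(\<lambda>k. 0) \<in> V" and comb: "\<And>y v t. y \<in> V \<Longrightarrow> v \<in> V \<Longrightarrow> (\<lambda>k. y k + t * v k) \<in> V"
    and c0: "V \<subseteq> c0" and avoid: "\<And>K. finite K \<Longrightarrow> \<exists>v\<in>V. (\<exists>k. v k \<noteq> 0) \<and> (\<forall>k\<in>K. v k = 0)"
  shows "\<exists>y\<in>V. \<exists>F. finite F \<and> card F = m \<and> (\<forall>k\<in>F. \<bar>y k\<bar> = 1) \<and> (\<forall>k. \<bar>y k\<bar> \<le> 1)"
proof (induction m)
  case 0
  then show ?case using zero by (intro bexI[of _ "\<lambda>k. 0"] exI[of _ "{}"]) auto
next
  case (Suc m)
  then obtain y F where y: "y \<in> V" "finite F" "card F = m" "\<forall>k\<in>F. \<bar>y k\<bar> = 1" "\<forall>k. \<bar>y k\<bar> \<le> 1"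
    by auto
  obtain v k1 where v: "v \<in> V" "v k1 \<noteq> 0" "\<forall>k\<in>F. v k = 0" using avoid[OF y(2)] by auto
  obtain t k2 where t: "\<forall>k. \<bar>y k + t * v k\<bar> \<le> 1" "k2 \<notin> F" "\<bar>y k2 + t * v k2\<bar> = 1"
    using c0_push_to_new_peak[of y v k1 F] y v c0 by blast
  show ?case
  proof (intro bexI[OF _ comb[OF y(1) v(1)]] exI[of _ "insert k2 F"] conjI)
    show "\<forall>k\<in>insert k2 F. \<bar>y k + t * v k\<bar> = 1" using t y(4) v(3) by auto
  qed (use y(2,3) t in auto)
qed

lemma lin_subspace_image_comb:
  assumes M: "lin_subspace M" "M \<subseteq> X" and B: "seq_linear_on X B"
    and y: "y \<in> B ` M" and v: "v \<in> B ` M"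
  shows "(\<lambda>k. y k + t * v k) \<in> B ` M"
proof -
  obtain x1 x2 where x: "x1 \<in> M" "x2 \<in> M" "y = B x1" "v = B x2" using y v by blast
  have "B (\<lambda>k. 1 * x1 k + t * x2 k) = (\<lambda>k. 1 * B x1 k + t * B x2 k)"
    using B x(1,2) M(2) unfolding seq_linear_on_def by blast
  moreover have "(\<lambda>k. 1 * x1 k + t * x2 k) \<in> M" using M(1) x unfolding lin_subspace_def by blast
  ultimately show ?thesis using x(3,4) by (intro image_eqI[of _ B "\<lambda>k. 1 * x1 k + t * x2 k"]) auto
qed

context lorentz_weight
begin

lemma seq_lincomb_in_subspace:
  assumes M: "M \<subseteq> lorentz_space w p" "lin_subspace M"
    and B: "seq_linear_on (lorentz_space w p) B" and v: "\<And>i. v i \<in> M"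
  shows "finite I \<Longrightarrow> (\<lambda>k. \<Sum>i\<in>I. c i * v i k) \<in> M
    \<and> B (\<lambda>k. \<Sum>i\<in>I. c i * v i k) = (\<lambda>k. \<Sum>i\<in>I. c i * B (v i) k)"
proof (induction I rule: finite_induct)
  case empty
  then show ?case
    using M(2) seq_linear_on_zero[OF B zero_in_lorentz_space] unfolding lin_subspace_def by simp
next
  case (insert j I)
  define s where "s = (\<lambda>k. \<Sum>i\<in>I. c i * v i k)"
  have sM: "s \<in> M" using insert.IH unfolding s_def by simp
  have "(\<lambda>k. \<Sum>i\<in>insert j I. c i * v i k) = (\<lambda>k. c j * v j k + 1 * s k)"
    unfolding s_def using insert by simp
  moreover have "(\<lambda>k. c j * v j k + 1 * s k) \<in> M" using M(2) v sM unfolding lin_subspace_def by blast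
  moreover have "B (\<lambda>k. c j * v j k + 1 * s k) = (\<lambda>k. c j * B (v j) k + 1 * B s k)"
    using B v sM M(1) unfolding seq_linear_on_def by blast
  ultimately show ?case using insert.IH insert.hyps unfolding s_def by simp
qed

lemma injective_image_avoids_finite_sets:
  assumes M: "M \<subseteq> lorentz_space w p" "lin_subspace M" "infinite_dim M"
    and B: "seq_linear_on (lorentz_space w p) B"
    and inj: "\<And>x. x \<in> M \<Longrightarrow> B x = (\<lambda>k. 0) \<Longrightarrow> x = (\<lambda>k. 0)"
    and K: "finite K"
  shows "\<exists>x\<in>M. (\<exists>k. B x k \<noteq> 0) \<and> (\<forall>k\<in>K. B x k = 0)"
proof -
  from M(3)[unfolded infinite_dim_def] obtain v :: "nat \<Rightarrow> seq" where "(\<forall>i. v i \<in> M)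
      \<and> (\<forall>n c. (\<forall>k. (\<Sum>i<n. c i * v i k) = 0) \<longrightarrow> (\<forall>i<n. c i = 0))" ..
  then have v: "\<And>i. v i \<in> M"
    and indep: "\<And>n c. (\<forall>k. (\<Sum>i<n. c i * v i k) = 0) \<Longrightarrow> (\<forall>i<n. c i = 0)" by blast+
  define D where "D = Suc (card K)"
  obtain c where c: "\<exists>i\<in>{..<D}. c i \<noteq> 0" "\<forall>k\<in>K. (\<Sum>i\<in>{..<D}. c i * B (v i) k) = 0"
    using underdetermined_linear_system[OF K finite_lessThan[of D], of "\<lambda>i. B (v i)"]
    unfolding D_def by auto
  define x where "x = (\<lambda>k. \<Sum>i<D. c i * v i k)"
  have x: "x \<in> M" "B x = (\<lambda>k. \<Sum>i<D. c i * B (v i) k)"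
    using seq_lincomb_in_subspace[OF M(1,2) B v finite_lessThan, of c] unfolding x_def by auto
  have "\<exists>k. B x k \<noteq> 0"
  proof (rule ccontr)
    assume "\<not> ?thesis"
    then have "x = (\<lambda>k. 0)" using inj[OF x(1)] by auto
    then show False using indep[where n=D and c=c] c(1) unfolding x_def by (auto simp: fun_eq_iff)
  qed
  then show ?thesis using x c(2) by (intro bexI[OF _ x(1)]) auto
qed

lemma dnorm_pow_le_if_abs_le_1:
  assumes y: "y \<in> lp_space p" and le_1: "\<And>k. \<bar>y k\<bar> \<le> 1"
  shows "dnorm_pow y \<le> real L + w L * lpnorm_pow y"
proof -
  have cy: "y \<in> c0" by (rule lp_space_subset_c0[OF y])
  have by': "bounded_seq y" by (rule c0_imp_bounded_seq[OF cy])
  have "(\<Sum>n<N. rearr y n powr p) \<le> lpnorm_pow y" for N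
    unfolding lpnorm_pow_def using sum_rearr_powr_le_suminf[OF p_pos cy] y
    by (simp add: mem_lp_space_iff)
  then have rs: "summable (\<lambda>n. rearr y n powr p)" "(\<Sum>n. rearr y n powr p) \<le> lpnorm_pow y"
    using nonneg_partial_sums_bounded[of "\<lambda>n. rearr y n powr p"] by auto
  have rp1: "rearr y n powr p \<le> 1" for n
    using rearr_le_bound[OF by' le_1, of n] rearr_nonneg[OF by', of n] p_pos
    by (simp add: powr_le1)
  define g where "g n = w n * rearr y n powr p" for n
  have sg: "summable g"
    using lp_space_subset_lorentz_space(1)[OF y] unfolding g_def by (simp add: mem_lorentz_space_iff)
  have "dnorm_pow y = (\<Sum>n. g (n + L)) + (\<Sum>i<L. g i)" unfolding dnorm_pow_def g_def[symmetric]
    by (rule suminf_split_initial_segment[OF sg])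
  also have "(\<Sum>i<L. g i) \<le> (\<Sum>i<L. 1)"
    unfolding g_def using w_le_1 w_nonneg rp1 by (intro sum_mono) (meson mult_le_one powr_ge_zero)
  also have "(\<Sum>n. g (n + L)) \<le> (\<Sum>n. w L * rearr y (n + L) powr p)"
    unfolding g_def using w_antimono[of L]
    by (intro suminf_le mult_right_mono summable_mult summable_ignore_initial_segment rs(1)
        sg[unfolded g_def]) auto
  also have "\<dots> = w L * (\<Sum>n. rearr y (n + L) powr p)"
    by (rule suminf_mult[OF summable_ignore_initial_segment[OF rs(1)]])
  also have "(\<Sum>n. rearr y (n + L) powr p) \<le> (\<Sum>n. rearr y n powr p)"
    using suminf_split_initial_segment[OF rs(1), of L] by (simp add: sum_nonneg)
  also have "\<dots> \<le> lpnorm_pow y" by (rule rs(2))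
  finally show ?thesis using w_nonneg[of L] by (simp add: mult_left_mono)
qed

lemma card_le_lpnorm_pow:
  assumes "y \<in> lp_space p" "finite F" "\<And>k. k \<in> F \<Longrightarrow> \<bar>y k\<bar> = 1"
  shows "real (card F) \<le> lpnorm_pow y"
proof -
  have "real (card F) = (\<Sum>k\<in>F. \<bar>y k\<bar> powr p)" using assms(3) by simp
  also have "\<dots> \<le> lpnorm_pow y" unfolding lpnorm_pow_def
    using assms(1,2) by (intro sum_le_suminf) (auto simp: mem_lp_space_iff)
  finally show ?thesis .
qed

text \<open>On vectors bounded by 1 the d-norm grows like w_L times the l_p-norm (plus L), so it cannot
  dominate the l_p-norm on a set with arbitrarily many peaks.\<close>

lemma lp_not_dominated_on_peaked_vectors:
  assumes V: "V \<subseteq> lp_space p" and \<delta>: "\<delta> > 0"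
    and dom: "\<And>y. y \<in> V \<Longrightarrow> \<delta> * lpnorm_pow y \<le> dnorm_pow y"
    and peaks: "\<And>m. \<exists>y\<in>V. \<exists>F. finite F \<and> card F = m \<and> (\<forall>k\<in>F. \<bar>y k\<bar> = 1) \<and> (\<forall>k. \<bar>y k\<bar> \<le> 1)"
  shows False
proof -
  obtain L where L: "w L < \<delta> / 2"
    using order_tendstoD(2)[OF w_tendsto_0, of "\<delta>/2"] \<delta> by (auto simp: eventually_sequentially)
  define D where "D = nat \<lceil>2 * real L / \<delta>\<rceil> + 1"
  obtain y F where y: "y \<in> V" "finite F" "card F = D" "\<forall>k\<in>F. \<bar>y k\<bar> = 1" "\<forall>k. \<bar>y k\<bar> \<le> 1"
    using peaks[of D] by blast
  have ylp: "y \<in> lp_space p" using y(1) V by auto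
  have "\<delta> * lpnorm_pow y \<le> real L + w L * lpnorm_pow y"
    using dom[OF y(1)] dnorm_pow_le_if_abs_le_1[OF ylp] y(5) by (meson order_trans)
  also have "\<dots> \<le> real L + \<delta> / 2 * lpnorm_pow y"
    using L lpnorm_pow_nonneg[OF ylp] by (intro add_left_mono mult_right_mono) auto
  finally have "lpnorm_pow y \<le> 2 * real L / \<delta>" using \<delta> by (simp add: field_simps)
  moreover have "real D \<le> lpnorm_pow y" using card_le_lpnorm_pow[OF ylp y(2)] y(3,4) by simp
  moreover have "real D > 2 * real L / \<delta>" unfolding D_def by linarith
  ultimately show False by simp
qed

lemma injective_image_has_peaked_vectors:
  assumes M: "M \<subseteq> lorentz_space w p" "lin_subspace M" "infinite_dim M"
    and B: "seq_linear_on (lorentz_space w p) B" "\<And>x. x \<in> lorentz_space w p \<Longrightarrow> B x \<in> c0"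
    and inj: "\<And>x. x \<in> M \<Longrightarrow> B x = (\<lambda>k. 0) \<Longrightarrow> x = (\<lambda>k. 0)"
  shows "\<exists>y\<in>B ` M. \<exists>F. finite F \<and> card F = m \<and> (\<forall>k\<in>F. \<bar>y k\<bar> = 1) \<and> (\<forall>k. \<bar>y k\<bar> \<le> 1)"
proof (rule exists_peaked_vector)
  show "(\<lambda>k. 0) \<in> B ` M"
    using M(2) seq_linear_on_zero[OF B(1) zero_in_lorentz_space] unfolding lin_subspace_def
    by (metis image_eqI)
  show "(\<lambda>k. y k + t * v k) \<in> B ` M" if "y \<in> B ` M" "v \<in> B ` M" for y v t
    by (rule lin_subspace_image_comb[OF M(2,1) B(1) that])
  show "B ` M \<subseteq> c0" using B(2) M(1) by blast
  show "\<exists>v\<in>B ` M. (\<exists>k. v k \<noteq> 0) \<and> (\<forall>k\<in>K. v k = 0)" if "finite K" for K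
    using injective_image_avoids_finite_sets[OF M B(1) inj that] by blast
qed

text \<open>The domination holds because A is bounded on d_{w,p} and B is bounded into l_p.\<close>

lemma bounded_below_composition:
  assumes A: "A \<in> Ld w p"
    and B: "bounded_op (lorentz_space w p) (lorentz_norm w p) (lp_space p) (lp_norm p) B"
    and M: "M \<subseteq> lorentz_space w p"
    and c: "c > 0" "\<And>x. x \<in> M \<Longrightarrow> c * lorentz_norm w p x \<le> lorentz_norm w p (A (B x))"
  obtains \<delta> where "\<delta> > 0" "\<And>x. x \<in> M \<Longrightarrow> \<delta> * lpnorm_pow (B x) \<le> dnorm_pow (B x)"
    "\<And>x. x \<in> M \<Longrightarrow> B x = (\<lambda>k. 0) \<Longrightarrow> x = (\<lambda>k. 0)"
proof -
  note B_lp = bounded_op_lorentz_lpD[OF B]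
  obtain KA where KA: "KA > 0" "\<forall>x\<in>lorentz_space w p. dnorm_pow (A x) \<le> KA * dnorm_pow x"
    using mem_LdD(3)[OF A] by auto
  obtain KB where KB: "KB > 0" "\<forall>x\<in>lorentz_space w p. lpnorm_pow (B x) \<le> KB * dnorm_pow x"
    using B_lp(3) by auto
  have Bx: "B x \<in> lorentz_space w p" if "x \<in> M" for x
    using B_lp(1) M that lp_space_subset_lorentz_space(1) by blast
  have below: "c powr p * dnorm_pow x \<le> KA * dnorm_pow (B x)" if x: "x \<in> M" for x
  proof -
    have "c powr p * dnorm_pow x \<le> dnorm_pow (A (B x))"
      using c(1) c(2)[OF x] M x dnorm_pow_nonneg mem_LdD(1)[OF A Bx[OF x]] p_pos
      by (intro mult_powr_inverse_le_imp_le) (auto simp: lorentz_norm_eq)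
    also have "\<dots> \<le> KA * dnorm_pow (B x)" using KA Bx[OF x] by blast
    finally show ?thesis .
  qed
  have dom: "c powr p / (KA * KB) * lpnorm_pow (B x) \<le> dnorm_pow (B x)" if x: "x \<in> M" for x
  proof -
    have "c powr p * lpnorm_pow (B x) \<le> c powr p * (KB * dnorm_pow x)"
      using KB M x by (intro mult_left_mono) auto
    also have "\<dots> = KB * (c powr p * dnorm_pow x)" by simp
    also have "\<dots> \<le> KB * (KA * dnorm_pow (B x))" using below[OF x] KB by (intro mult_left_mono) auto
    finally show ?thesis using KA KB by (simp add: divide_le_eq ac_simps)
  qed
  have inj: "x = (\<lambda>k. 0)" if x: "x \<in> M" "B x = (\<lambda>k. 0)" for x
  proof -
    have "dnorm_pow x \<le> 0" using below[OF x(1)] x(2) c(1) by (simp add: dnorm_pow_zero mult_le_0_iff)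
    then show ?thesis using dnorm_pow_nonneg dnorm_pow_eq_0_imp M x(1) by (meson antisym subsetD)
  qed
  show thesis by (rule that[OF _ dom inj]) (use c KA KB in simp)
qed

lemma J_j_subset_strictly_singular: "J_j w p \<subseteq> strictly_singular_ops w p"
proof
  fix S assume "S \<in> J_j w p"
  then obtain A B where S: "S \<in> Ld w p" and A: "A \<in> Ld w p"
    and B: "bounded_op (lorentz_space w p) (lorentz_norm w p) (lp_space p) (lp_norm p) B"
    and S_eq: "\<forall>x\<in>lorentz_space w p. S x = A (jmap (B x))" unfolding J_j_def by auto
  note B_lp = bounded_op_lorentz_lpD[OF B]
  show "S \<in> strictly_singular_ops w p" unfolding strictly_singular_ops_def
  proof (intro CollectI conjI S allI impI notI)
    fix M assume M: "M \<subseteq> lorentz_space w p \<and> lin_subspace M \<and> infinite_dim M"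
    assume "\<exists>c>0. \<forall>x\<in>M. c * lorentz_norm w p x \<le> lorentz_norm w p (S x)"
    then obtain c where "c > 0" "\<And>x. x \<in> M \<Longrightarrow> c * lorentz_norm w p x \<le> lorentz_norm w p (A (B x))"
      using S_eq M by (auto simp: jmap_def subset_iff)
    then obtain \<delta> where \<delta>: "\<delta> > 0" "\<And>x. x \<in> M \<Longrightarrow> \<delta> * lpnorm_pow (B x) \<le> dnorm_pow (B x)"
      and inj: "\<And>x. x \<in> M \<Longrightarrow> B x = (\<lambda>k. 0) \<Longrightarrow> x = (\<lambda>k. 0)"
      using bounded_below_composition[OF A B] M by blast
    have "B ` M \<subseteq> lp_space p" using B_lp(1) M by blast
    moreover have "\<exists>y\<in>B ` M. \<exists>F. finite F \<and> card F = m \<and> (\<forall>k\<in>F. \<bar>y k\<bar> = 1) \<and> (\<forall>k. \<bar>y k\<bar> \<le> 1)"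
      for m
      using M B_lp(1) lp_space_subset_c0
      by (intro injective_image_has_peaked_vectors[OF _ _ _ B_lp(2) _ inj]) auto
    ultimately show False using lp_not_dominated_on_peaked_vectors \<delta> by blast
  qed
qed

end

section \<open>A non-compact operator factoring through j\<close>

context lorentz_weight
begin

definition wsum :: "nat \<Rightarrow> real" where
  "wsum N = (\<Sum>i<N. w i)"

lemma wsum_nonneg: "0 \<le> wsum N"
  unfolding wsum_def by (intro sum_nonneg w_nonneg)

lemma wsum_mono: "M \<le> N \<Longrightarrow> wsum M \<le> wsum N"
  unfolding wsum_def by (intro sum_mono2) (auto simp: w_nonneg)

lemma wsum_ge_1: "1 \<le> N \<Longrightarrow> 1 \<le> wsum N"
  using wsum_mono[of 1 N] w_0 by (simp add: wsum_def)

lemma wsum_unbounded: "\<exists>N. wsum N > B"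
proof (rule ccontr)
  assume "\<not> ?thesis"
  then have "summable w"
    using nonneg_partial_sums_bounded(1)[of w B] w_nonneg unfolding wsum_def by (auto simp: not_less)
  then show False using w_not_summable by simp
qed

lemma wsum_average_tendsto_0: "(\<lambda>N. wsum N / real N) \<longlonglongrightarrow> 0"
proof (rule LIMSEQ_I)
  fix \<epsilon> :: real assume \<epsilon>: "\<epsilon> > 0"
  obtain M where M: "\<And>n. n \<ge> M \<Longrightarrow> w n < \<epsilon> / 2"
    using order_tendstoD(2)[OF w_tendsto_0, of "\<epsilon>/2"] \<epsilon> by (auto simp: eventually_sequentially)
  show "\<exists>N0. \<forall>N\<ge>N0. norm (wsum N / real N - 0) < \<epsilon>"
  proof (intro exI allI impI)
    fix N assume N: "N \<ge> max (M + 1) (nat \<lceil>2 * wsum M / \<epsilon>\<rceil> + 1)"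
    then have NM: "M \<le> N" and N_pos: "0 < real N" by auto
    have "real N > 2 * wsum M / \<epsilon>" using N by linarith
    then have N_large: "wsum M < real N * (\<epsilon> / 2)" using \<epsilon> by (simp add: field_simps)
    have "wsum N = wsum M + (\<Sum>i\<in>{M..<N}. w i)"
      unfolding wsum_def using NM by (simp add: sum.atLeastLessThan_concat flip: atLeast0LessThan)
    also have "(\<Sum>i\<in>{M..<N}. w i) \<le> (\<Sum>i\<in>{M..<N}. \<epsilon> / 2)"
      using M by (intro sum_mono) (auto intro: less_imp_le)
    also have "\<dots> \<le> real N * (\<epsilon> / 2)" using \<epsilon> by simp
    finally have "wsum N < real N * \<epsilon>" using N_large by simp
    then show "norm (wsum N / real N - 0) < \<epsilon>"
      using N_pos wsum_nonneg[of N] by (simp add: divide_less_eq mult.commute)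
  qed
qed

lemma wsum_average_antimono:
  assumes M: "1 \<le> M" and "M \<le> N" shows "wsum N / real N \<le> wsum M / real M"
  using assms(2)
proof (induction N rule: dec_induct)
  case (step N)
  have "real N * w N \<le> wsum N"
    unfolding wsum_def using sum_mono[of "{..<N}" "\<lambda>_. w N" w] w_antimono by simp
  then have "wsum (Suc N) / real (Suc N) \<le> wsum N / real N"
    using M step.hyps by (simp add: wsum_def field_simps)
  then show ?case using step.IH by linarith
qed simp

lemma exists_next_block_len:
  "1 \<le> M \<Longrightarrow> \<exists>N. M < N \<and> 2 * wsum M \<le> wsum N \<and> wsum N / real N \<le> wsum M / (2 * real M)"
proof -
  assume M: "1 \<le> M"
  have "wsum M / (2 * real M) > 0" using wsum_ge_1[OF M] M by simp
  from order_tendstoD(2)[OF wsum_average_tendsto_0 this] obtain N1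
    where N1: "\<And>N. N \<ge> N1 \<Longrightarrow> wsum N / real N < wsum M / (2 * real M)"
    by (auto simp: eventually_sequentially)
  obtain N2 where N2: "wsum N2 > 2 * wsum M" using wsum_unbounded by auto
  define N where "N = max (max N1 N2) (M + 1)"
  have "wsum N2 \<le> wsum N" unfolding N_def by (intro wsum_mono) auto
  moreover have "M < N" "N1 \<le> N" unfolding N_def by auto
  ultimately show ?thesis using N1[of N] N2 by (intro exI[of _ N]) auto
qed

primrec block_len :: "nat \<Rightarrow> nat" where
  "block_len 0 = 1"
| "block_len (Suc n) = (LEAST N. block_len n < N \<and> 2 * wsum (block_len n) \<le> wsum N
      \<and> wsum N / real N \<le> wsum (block_len n) / (2 * real (block_len n)))"

declare block_len.simps(2) [simp del]

lemma block_len_ge_1: "1 \<le> block_len n"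
proof (induction n)
  case (Suc n)
  then show ?case
    using LeastI_ex[OF exists_next_block_len[OF Suc.IH]] unfolding block_len.simps(2) by simp
qed simp

lemma block_len_Suc: "block_len n < block_len (Suc n)
    \<and> 2 * wsum (block_len n) \<le> wsum (block_len (Suc n))
    \<and> wsum (block_len (Suc n)) / real (block_len (Suc n))
      \<le> wsum (block_len n) / (2 * real (block_len n))"
  unfolding block_len.simps(2) by (rule LeastI_ex[OF exists_next_block_len[OF block_len_ge_1]])

lemma strict_mono_block_len: "strict_mono block_len"
  using block_len_Suc by (intro strict_monoI_Suc) auto

lemma block_len_gt: "n < block_len n"
proof (induction n)
  case (Suc n)
  then show ?case using block_len_Suc[of n] by linarith
qed simp

definition block_density :: "nat \<Rightarrow> real" where
  "block_density n = wsum (block_len n) / real (block_len n)"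

lemma block_density_pos: "0 < block_density n"
  unfolding block_density_def using wsum_ge_1[OF block_len_ge_1[of n]] block_len_ge_1[of n] by simp

lemma block_density_Suc: "2 * block_density (Suc n) \<le> block_density n"
  using block_len_Suc[of n] block_len_ge_1[of n] unfolding block_density_def by (simp add: field_simps)

lemma sum_wsum_block_len_le: "(\<Sum>n<Suc j. wsum (block_len n)) \<le> 2 * wsum (block_len j)"
proof (induction j)
  case (Suc j)
  then show ?case using block_len_Suc[of j] by simp
qed (simp add: wsum_nonneg)

lemma sum_block_density_le: "a \<le> b \<Longrightarrow> (\<Sum>n\<in>{a..<b}. block_density n) + 2 * block_density b \<le> 2 * block_density a"
proof (induction b rule: dec_induct)
  case (step b)
  then show ?case using block_density_Suc[of b] by simp
qed simp

lemma sum_block_density_min_le_short: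
  assumes "\<And>n. n < j \<Longrightarrow> block_len n \<le> M"
  shows "(\<Sum>n<j. block_density n * real (min M (block_len n))) \<le> 2 * wsum M"
proof (cases j)
  case (Suc j')
  have "(\<Sum>n<j. block_density n * real (min M (block_len n))) = (\<Sum>n<j. wsum (block_len n))"
  proof (intro sum.cong refl)
    fix n assume "n \<in> {..<j}"
    then have "min M (block_len n) = block_len n" using assms[of n] by (simp add: min_def)
    then show "block_density n * real (min M (block_len n)) = wsum (block_len n)"
      unfolding block_density_def using block_len_ge_1[of n] by simp
  qed
  also have "\<dots> \<le> 2 * wsum (block_len j')" unfolding Suc by (rule sum_wsum_block_len_le)
  also have "wsum (block_len j') \<le> wsum M" using assms[of j'] Suc by (intro wsum_mono) auto
  finally show ?thesis by simp
qed (simp add: wsum_nonneg)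

lemma sum_block_density_min_le_long:
  assumes M: "1 \<le> M" and j: "M < block_len j" "j \<le> K"
  shows "(\<Sum>n\<in>{j..<K}. block_density n * real (min M (block_len n))) \<le> 2 * wsum M"
proof -
  have "(\<Sum>n\<in>{j..<K}. block_density n * real (min M (block_len n))) = (\<Sum>n\<in>{j..<K}. block_density n) * real M"
    unfolding sum_distrib_right
  proof (intro sum.cong refl)
    fix n assume "n \<in> {j..<K}"
    then have "block_len j \<le> block_len n" using strict_mono_block_len by (simp add: strict_mono_less_eq)
    then show "block_density n * real (min M (block_len n)) = block_density n * real M"
      using j(1) by (simp add: min_def)
  qed
  also have "\<dots> \<le> 2 * block_density j * real M"
    using sum_block_density_le[OF j(2)] block_density_pos[of K] by (intro mult_right_mono) auto
  also have "\<dots> \<le> 2 * wsum M"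
    using wsum_average_antimono[OF M less_imp_le[OF j(1)]] M
    unfolding block_density_def by (simp add: le_divide_eq)
  finally show ?thesis .
qed

lemma sum_block_density_min_le: "(\<Sum>n<K. block_density n * real (min M (block_len n))) \<le> 4 * wsum M"
proof (cases "M = 0")
  case False
  define j where "j = min K (LEAST n. M < block_len n)"
  have j_long: "M < block_len j" if "j \<noteq> K"
    using that LeastI[of "\<lambda>n. M < block_len n" M, OF block_len_gt] unfolding j_def by (simp add: min_def split: if_splits)
  have j_short: "n < j \<Longrightarrow> block_len n \<le> M" for n
    unfolding j_def using not_less_Least by fastforce
  have "(\<Sum>n<K. block_density n * real (min M (block_len n)))
      = (\<Sum>n<j. block_density n * real (min M (block_len n)))
      + (\<Sum>n\<in>{j..<K}. block_density n * real (min M (block_len n)))"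
    using sum.atLeastLessThan_concat[of 0 j K, symmetric] by (simp add: j_def atLeast0LessThan)
  also have "\<dots> \<le> 2 * wsum M + 2 * wsum M"
  proof (rule add_mono)
    show "(\<Sum>n<j. block_density n * real (min M (block_len n))) \<le> 2 * wsum M"
      by (rule sum_block_density_min_le_short[OF j_short])
    show "(\<Sum>n\<in>{j..<K}. block_density n * real (min M (block_len n))) \<le> 2 * wsum M"
    proof (cases "j = K")
      case False
      then show ?thesis
        using \<open>M \<noteq> 0\<close> by (intro sum_block_density_min_le_long j_long) (auto simp: j_def)
    qed (simp add: wsum_nonneg)
  qed
  finally show ?thesis by simp
qed (simp add: wsum_nonneg)

definition block_start :: "nat \<Rightarrow> nat" where
  "block_start n = (\<Sum>m<n. block_len m)"

definition block :: "nat \<Rightarrow> nat set" where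
  "block n = {block_start n ..< block_start n + block_len n}"

definition block_coeff :: "nat \<Rightarrow> real" where
  "block_coeff n = wsum (block_len n) powr (1/p) / real (block_len n)"

definition block_avg :: "seq \<Rightarrow> seq" where
  "block_avg x = (\<lambda>n. block_coeff n * (\<Sum>k\<in>block n. x k))"

lemma finite_block: "finite (block n)" by (simp add: block_def)

lemma card_block: "card (block n) = block_len n" by (simp add: block_def)

lemma block_disjoint: "m \<noteq> n \<Longrightarrow> k \<in> block m \<Longrightarrow> k \<notin> block n"
proof -
  have "k \<notin> block n" if "m < n" "k \<in> block m" for m n
  proof -
    have "block_start m + block_len m = block_start (Suc m)" unfolding block_start_def by simp
    also have "\<dots> \<le> block_start n" using that unfolding block_start_def by (intro sum_mono2) auto
    finally show ?thesis using that unfolding block_def by auto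
  qed
  then show "m \<noteq> n \<Longrightarrow> k \<in> block m \<Longrightarrow> k \<notin> block n" by (metis linorder_neqE_nat)
qed

lemma block_coeff_nonneg: "0 \<le> block_coeff n"
  unfolding block_coeff_def by simp

lemma block_coeff_powr: "block_coeff n powr p * real (block_len n) powr (p - 1) = block_density n"
proof -
  have N: "real (block_len n) \<ge> 1" using block_len_ge_1[of n] by simp
  have "block_coeff n powr p = wsum (block_len n) / real (block_len n) powr p"
    unfolding block_coeff_def using wsum_ge_1[OF block_len_ge_1[of n]] p_pos
    by (simp add: powr_divide powr_powr)
  moreover have "real (block_len n) powr (p - 1) = real (block_len n) powr p / real (block_len n)"
    using N by (simp add: powr_diff)
  ultimately show ?thesis unfolding block_density_def using N by simp
qed

lemma abs_block_avg_powr_le: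
  assumes x: "x \<in> lorentz_space w p"
  shows "\<bar>block_avg x n\<bar> powr p \<le> block_density n * (\<Sum>i<block_len n. rearr x i powr p)"
proof -
  have "\<bar>\<Sum>k\<in>block n. x k\<bar> powr p \<le> real (block_len n) powr (p - 1) * (\<Sum>k\<in>block n. \<bar>x k\<bar> powr p)"
    using abs_sum_powr_le_card_powr[OF p_ge_1 finite_block, of x n] by (simp add: card_block)
  also have "\<dots> \<le> real (block_len n) powr (p - 1) * (\<Sum>i<block_len n. rearr x i powr p)"
    using sum_abs_powr_le_sum_rearr[OF p_pos lorentz_space_c0[OF x] finite_block card_block]
    by (intro mult_left_mono) auto
  finally have "block_coeff n powr p * \<bar>\<Sum>k\<in>block n. x k\<bar> powr p
      \<le> block_coeff n powr p * (real (block_len n) powr (p - 1) * (\<Sum>i<block_len n. rearr x i powr p))"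
    by (intro mult_left_mono) auto
  moreover have "\<bar>block_avg x n\<bar> powr p = block_coeff n powr p * \<bar>\<Sum>k\<in>block n. x k\<bar> powr p"
    unfolding block_avg_def using block_coeff_nonneg[of n] by (simp add: abs_mult powr_mult)
  ultimately show ?thesis using block_coeff_powr[of n] by (simp add: mult.assoc[symmetric])
qed

text \<open>Exchanging the order of summation, the block sums of the rearrangement carry the weights
  c_i = \<Sum>_{n<K, i<N_n} W(N_n)/N_n, whose partial sums are dominated by those of 4 w; Abel
  summation against the non-increasing (x*_i)^p concludes.\<close>

lemma sum_block_density_rearr_le:
  assumes x: "x \<in> lorentz_space w p"
  shows "(\<Sum>n<K. block_density n * (\<Sum>i<block_len n. rearr x i powr p)) \<le> 4 * dnorm_pow x"
proof -
  have bx: "bounded_seq x" by (intro c0_imp_bounded_seq lorentz_space_c0 x)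
  define y where "y i = rearr x i powr p" for i
  define L where "L = block_len K"
  define c where "c i = (\<Sum>n<K. block_density n * (if i < block_len n then 1 else 0))" for i
  have extend: "(\<Sum>i<block_len n. y i) = (\<Sum>i<L. (if i < block_len n then 1 else 0) * y i)"
    if "n < K" for n
  proof -
    have "block_len n \<le> L" using that strict_mono_block_len unfolding L_def
      by (simp add: strict_mono_less_eq)
    then have "(\<Sum>i<block_len n. y i) = (\<Sum>i<L. if i < block_len n then y i else 0)"
      by (rule sum_lessThan_if_less[symmetric])
    also have "\<dots> = (\<Sum>i<L. (if i < block_len n then 1 else 0) * y i)" by (intro sum.cong) auto
    finally show ?thesis .
  qed
  have "(\<Sum>n<K. block_density n * (\<Sum>i<block_len n. y i))
      = (\<Sum>n<K. block_density n * (\<Sum>i<L. (if i < block_len n then 1 else 0) * y i))"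
    using extend by (intro sum.cong) auto
  also have "\<dots> = (\<Sum>i<L. c i * y i)" unfolding c_def
    by (simp add: sum_distrib_left sum_distrib_right sum.swap[of _ "{..<K}"] mult.assoc)
  also have "\<dots> \<le> (\<Sum>i<L. (4 * w i) * y i)"
  proof (rule sum_mult_antimono_le)
    fix M
    have "(\<Sum>i<M. c i) = (\<Sum>n<K. \<Sum>i<M. block_density n * (if i < block_len n then 1 else 0))"
      unfolding c_def by (rule sum.swap)
    also have "\<dots> = (\<Sum>n<K. block_density n * (\<Sum>i<M. if i < block_len n then 1 else 0))"
      by (simp only: sum_distrib_left)
    also have "\<dots> = (\<Sum>n<K. block_density n * real (min M (block_len n)))"
      by (simp only: sum_lessThan_if_less_const)
    also have "\<dots> \<le> (\<Sum>i<M. 4 * w i)"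
      using sum_block_density_min_le by (simp add: wsum_def sum_distrib_left)
    finally show "(\<Sum>i<M. c i) \<le> (\<Sum>i<M. 4 * w i)" .
  next
    show "y (Suc i) \<le> y i" for i unfolding y_def
      using rearr_Suc_le[OF bx, of i] rearr_nonneg[OF bx, of "Suc i"] p_pos by (intro powr_mono2) auto
  qed (simp add: y_def)
  also have "\<dots> \<le> 4 * dnorm_pow x"
    using sum_le_suminf[of "\<lambda>i. w i * y i" "{..<L}"] lorentz_term_nonneg x
    unfolding dnorm_pow_def y_def
    by (simp add: mem_lorentz_space_iff mult.assoc flip: sum_distrib_left)
  finally show ?thesis unfolding y_def .
qed

lemma block_avg_lp_bound:
  assumes x: "x \<in> lorentz_space w p"
  shows "block_avg x \<in> lp_space p" "lpnorm_pow (block_avg x) \<le> 4 * dnorm_pow x"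
proof -
  have "(\<Sum>n<K. \<bar>block_avg x n\<bar> powr p) \<le> 4 * dnorm_pow x" for K
  proof -
    have "(\<Sum>n<K. \<bar>block_avg x n\<bar> powr p)
        \<le> (\<Sum>n<K. block_density n * (\<Sum>i<block_len n. rearr x i powr p))"
      by (intro sum_mono abs_block_avg_powr_le[OF x])
    also have "\<dots> \<le> 4 * dnorm_pow x" by (rule sum_block_density_rearr_le[OF x])
    finally show ?thesis .
  qed
  then show "block_avg x \<in> lp_space p" "lpnorm_pow (block_avg x) \<le> 4 * dnorm_pow x"
    using nonneg_partial_sums_bounded[of "\<lambda>n. \<bar>block_avg x n\<bar> powr p" "4 * dnorm_pow x"]
    unfolding mem_lp_space_iff lpnorm_pow_def by auto
qed

lemma block_avg_bounded_op:
  "bounded_op (lorentz_space w p) (lorentz_norm w p) (lp_space p) (lp_norm p) block_avg"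
proof (rule bounded_op_lorentz_lpI[of _ 4])
  show "seq_linear_on (lorentz_space w p) block_avg"
    by (auto simp: seq_linear_on_def block_avg_def fun_eq_iff sum.distrib sum_distrib_left
        algebra_simps)
qed (auto simp: block_avg_lp_bound)

definition block_vector :: "nat \<Rightarrow> seq" where
  "block_vector n = (\<lambda>k. if k \<in> block n then wsum (block_len n) powr (-1/p) else 0)"

lemma block_vector_in_lorentz_space:
  "block_vector n \<in> lorentz_space w p" "dnorm_pow (block_vector n) \<le> 1"
proof -
  define h where "h = wsum (block_len n) powr (-1/p)"
  have W: "wsum (block_len n) \<ge> 1" by (rule wsum_ge_1[OF block_len_ge_1])
  have "h powr p = wsum (block_len n) powr (-1/p * p)" unfolding h_def by (rule powr_powr)
  then have h: "h > 0" "h powr p * wsum (block_len n) = 1"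
    unfolding h_def using W p_pos by (auto simp: powr_minus_divide)
  have c: "block_vector n \<in> c0"
    by (rule c0_eventually_dominated[of "\<lambda>k. 0" "block_start n + block_len n"])
      (auto simp: c0_def block_vector_def block_def)
  have b: "bounded_seq (block_vector n)" by (rule c0_imp_bounded_seq[OF c])
  define t where "t i = w i * rearr (block_vector n) i powr p" for i
  have t_nonneg: "0 \<le> t i" for i unfolding t_def by (rule lorentz_term_nonneg)
  have t_le: "t i \<le> w i * h powr p" for i
    unfolding t_def using rearr_le_bound[OF b, of h i] rearr_nonneg[OF b, of i] p_pos w_nonneg[of i] h(1)
    by (intro mult_left_mono powr_mono2) (auto simp: block_vector_def h_def)
  have t_0: "t i = 0" if "i \<ge> block_len n" for i
    using rearr_eq_0_if_support[OF b finite_block] that p_pos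
    by (auto simp: t_def card_block block_vector_def)
  have "(\<Sum>i<K. t i) \<le> 1" for K
  proof -
    have "(\<Sum>i<K. t i) \<le> (\<Sum>i<K + block_len n. t i)" by (intro sum_mono2) (auto simp: t_nonneg)
    also have "\<dots> = (\<Sum>i<block_len n. t i)"
      using t_0 by (intro sum.mono_neutral_right) auto
    also have "\<dots> \<le> (\<Sum>i<block_len n. w i * h powr p)" by (intro sum_mono t_le)
    also have "\<dots> = h powr p * wsum (block_len n)"
      unfolding wsum_def by (simp add: sum_distrib_left mult.commute)
    also have "\<dots> = 1" by (rule h(2))
    finally show ?thesis .
  qed
  then show "block_vector n \<in> lorentz_space w p" "dnorm_pow (block_vector n) \<le> 1"
    using nonneg_partial_sums_bounded[of t 1] t_nonneg c
    unfolding mem_lorentz_space_iff dnorm_pow_def t_def by auto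
qed

lemma block_avg_block_vector: "block_avg (block_vector n) = (\<lambda>m. if m = n then 1 else 0)"
proof
  fix m
  show "block_avg (block_vector n) m = (if m = n then 1 else 0)"
  proof (cases "m = n")
    case True
    have "wsum (block_len n) powr (1/p) * wsum (block_len n) powr (-1/p) = 1"
      using wsum_ge_1[OF block_len_ge_1[of n]] by (simp flip: powr_add)
    then show ?thesis using True block_len_ge_1[of n]
      unfolding block_avg_def block_vector_def block_coeff_def by (simp add: card_block)
  next
    case False
    then have "(\<Sum>k\<in>block m. block_vector n k) = 0"
      unfolding block_vector_def using block_disjoint by (intro sum.neutral) auto
    then show ?thesis unfolding block_avg_def using False by simp
  qed
qed

lemma block_avg_not_compact: "block_avg \<notin> compact_ops w p"
proof
  assume "block_avg \<in> compact_ops w p"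
  moreover have "\<forall>i. block_vector i \<in> lorentz_space w p \<and> lorentz_norm w p (block_vector i) \<le> 1"
    using block_vector_in_lorentz_space lorentz_norm_le_1 by blast
  ultimately obtain r y where r: "strict_mono r" and y: "y \<in> lorentz_space w p"
    and lim: "(\<lambda>i. lorentz_norm w p (\<lambda>k. block_avg (block_vector (r i)) k - y k)) \<longlonglongrightarrow> 0"
    unfolding compact_ops_def by blast
  have "y \<longlonglongrightarrow> 0" using y by (simp add: mem_lorentz_space_iff c0_def)
  then have "(\<lambda>i. \<bar>y (r i)\<bar>) \<longlonglongrightarrow> 0" using LIMSEQ_subseq_LIMSEQ[OF _ r] tendsto_rabs_zero_iff
    by (fastforce simp: comp_def)
  then have "\<forall>\<^sub>F i in sequentially.
      dnorm_pow (\<lambda>k. block_avg (block_vector (r i)) k - y k) < (1/2) powr p \<and> \<bar>y (r i)\<bar> < 1/2"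
    using order_tendstoD(2)[OF dnorm_pow_tendsto_0[OF lim], of "(1/2) powr p"]
    by (intro eventually_conj) (auto dest: order_tendstoD(2)[of _ 0 _ "1/2"])
  then obtain i where i: "dnorm_pow (\<lambda>k. block_avg (block_vector (r i)) k - y k) < (1/2) powr p"
    "\<bar>y (r i)\<bar> < 1/2"
    using eventually_happens'[OF trivial_limit_sequentially] by blast
  define z where "z = (\<lambda>k. block_avg (block_vector (r i)) k - y k)"
  have "z \<in> lorentz_space w p" unfolding z_def
    using block_avg_bounded_op lorentz_space_diff[OF _ y] block_vector_in_lorentz_space(1)
      bounded_lorentz_lp_in_J_j J_j_subset_Ld mem_LdD(1) by blast
  then have "\<bar>z (r i)\<bar> powr p \<le> dnorm_pow z" by (rule abs_powr_le_dnorm_pow)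
  moreover have "(1/2) powr p < \<bar>z (r i)\<bar> powr p"
    using i(2) p_pos unfolding z_def block_avg_block_vector by (intro powr_less_mono2) auto
  ultimately show False using i(1) unfolding z_def by linarith
qed

end

theorem corollary4p4:
  fixes w :: "nat \<Rightarrow> real" and p :: real
  assumes "1 \<le> p"
    and "w 0 = 1"
    and "\<And>n. w (Suc n) \<le> w n"
    and "w \<longlonglongrightarrow> 0"
    and "\<not> summable w"
  shows "compact_ops w p \<subset> op_closure w p (J_j w p)
       \<and> J_j w p \<subseteq> strictly_singular_ops w p \<inter> J_lp w p"
proof -
  interpret lorentz_weight w p using assms by unfold_locales auto
  have "block_avg \<in> J_j w p"
    by (rule bounded_lorentz_lp_in_J_j[OF block_avg_bounded_op])
  then have "block_avg \<in> op_closure w p (J_j w p) - compact_ops w p"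
    using subset_op_closure J_j_subset_Ld block_avg_not_compact by blast
  then show ?thesis
    using compact_ops_subset_closure_J_j J_j_subset_strictly_singular J_j_subset_J_lp by blast
qed

end
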